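(* For any skew shape $\lambda/\mu$ (partitions $\mu\subseteq\lambda$) and any positive integer $n$, \[ s_{\lambda/\mu}\, s_n \;=\; s_{\lambda/\mu}\, h_n \;=\; \sum_{k=0}^{n} (-1)^k \sum_{\substack{\lambda^+/\lambda \ (n-k)\text{-horizontal strip}\\ \mu/\mu^- \ k\text{-vertical strip}}} s_{\lambda^+/\mu^-}, \] where the inner sum is over all pairs of partitions $\lambda^+,\mu^-$ such that $\lambda^+/\lambda$ is a horizontal strip of size $n-k$ and $\mu/\mu^-$ is a vertical strip of size $k$.
   Context: Symmetric functions are in variables $x=(x_1,x_2,\dots)$. For partitions $\mu\subseteq\lambda$, the skew Schur function is $s_{\lambda/\mu}=\sum_T x^T$, summed over semistandard Young tableaux $T$ of shape $\lambda/\mu$ (fillings with positive integers, weakly increasing along rows and strictly increasing along columns), where $x^T=\prod_i x_i^{(\text{number of entries } i)}$. $s_n=h_n$ is the complete homogeneous symmetric function. A skew shape $\alpha/\beta$ is a horizontal strip (resp. vertical strip) if no two of its cells lie in the same column (resp. row); a $k$-horizontal/vertical strip is one with $k$ cells (in particular $\alpha\supseteq\beta$ are partitions). *)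

theory Defs
  imports Main "HOL-Library.Poly_Mapping"
begin

(* Partitions: weakly decreasing sequences of naturals (row lengths, rows indexed from 0)
   with finitely many nonzero entries. *)
definition is_partition :: "(nat \<Rightarrow> nat) \<Rightarrow> bool" where
  "is_partition la \<longleftrightarrow> (\<forall>i j. i \<le> j \<longrightarrow> la j \<le> la i) \<and> finite {i. la i \<noteq> 0}"

definition part_subseteq :: "(nat \<Rightarrow> nat) \<Rightarrow> (nat \<Rightarrow> nat) \<Rightarrow> bool" where
  "part_subseteq mu la \<longleftrightarrow> (\<forall>i. mu i \<le> la i)"

definition skew_cells :: "(nat \<Rightarrow> nat) \<Rightarrow> (nat \<Rightarrow> nat) \<Rightarrow> (nat \<times> nat) set" where
  "skew_cells la mu = {(i, j). mu i \<le> j \<and> j < la i}"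

(* semistandard Young tableaux of shape la/mu, entries positive integers;
   T is extended by 0 outside the diagram *)
definition ssyt :: "(nat \<Rightarrow> nat) \<Rightarrow> (nat \<Rightarrow> nat) \<Rightarrow> (nat \<times> nat \<Rightarrow> nat) \<Rightarrow> bool" where
  "ssyt la mu T \<longleftrightarrow>
     (\<forall>c. c \<notin> skew_cells la mu \<longrightarrow> T c = 0) \<and>
     (\<forall>c \<in> skew_cells la mu. 1 \<le> T c) \<and>
     (\<forall>i j j'. (i, j) \<in> skew_cells la mu \<longrightarrow> (i, j') \<in> skew_cells la mu \<longrightarrow> j \<le> j' \<longrightarrow> T (i, j) \<le> T (i, j')) \<and>
     (\<forall>i i' j. (i, j) \<in> skew_cells la mu \<longrightarrow> (i', j) \<in> skew_cells la mu \<longrightarrow> i < i' \<longrightarrow> T (i, j) < T (i', j))"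

(* Symmetric functions (formal power series in x_1, x_2, ...) are represented by their
   coefficient function on monomials x^a, a :: nat \<Rightarrow>\<^sub>0 nat (Poly_Mapping.lookup a k = exponent of x_k). *)
type_synonym sfun = "(nat \<Rightarrow>\<^sub>0 nat) \<Rightarrow> int"

(* coefficient of x^a in s_{la/mu}: number of SSYT with content a *)
definition skew_schur :: "(nat \<Rightarrow> nat) \<Rightarrow> (nat \<Rightarrow> nat) \<Rightarrow> sfun" where
  "skew_schur la mu a = int (card {T. ssyt la mu T \<and>
       (\<forall>k. Poly_Mapping.lookup a k = card {c \<in> skew_cells la mu. T c = k})})"

(* complete homogeneous symmetric function h_n: sum of all monomials of degree n in x_1, x_2, ... *)
definition hsym :: "nat \<Rightarrow> sfun" where
  "hsym n a = (if Poly_Mapping.lookup a 0 = 0 \<and> (\<Sum>k\<in>Poly_Mapping.keys a. Poly_Mapping.lookup a k) = n then 1 else 0)"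

definition row_partition :: "nat \<Rightarrow> nat \<Rightarrow> nat" where
  "row_partition n = (\<lambda>i. if i = 0 then n else 0)"

definition empty_partition :: "nat \<Rightarrow> nat" where
  "empty_partition = (\<lambda>_. 0)"

definition sf_mult :: "sfun \<Rightarrow> sfun \<Rightarrow> sfun" where
  "sf_mult f g a = (\<Sum>(b, c) \<in> {(b, c). b + c = a}. f b * g c)"

definition horizontal_strip :: "(nat \<Rightarrow> nat) \<Rightarrow> (nat \<Rightarrow> nat) \<Rightarrow> nat \<Rightarrow> bool" where
  "horizontal_strip al be k \<longleftrightarrow> is_partition al \<and> is_partition be \<and> part_subseteq be al \<and>
     (\<forall>i i' j. (i, j) \<in> skew_cells al be \<longrightarrow> (i', j) \<in> skew_cells al be \<longrightarrow> i = i') \<and>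
     card (skew_cells al be) = k"

definition vertical_strip :: "(nat \<Rightarrow> nat) \<Rightarrow> (nat \<Rightarrow> nat) \<Rightarrow> nat \<Rightarrow> bool" where
  "vertical_strip al be k \<longleftrightarrow> is_partition al \<and> is_partition be \<and> part_subseteq be al \<and>
     (\<forall>i j j'. (i, j) \<in> skew_cells al be \<longrightarrow> (i, j') \<in> skew_cells al be \<longrightarrow> j = j') \<and>
     card (skew_cells al be) = k"

end

theory Submission
  imports Defs "HOL-Library.Disjoint_Sets"
begin

(* The identity is proved coefficientwise, by induction on the largest variable x_m occurring in
   the monomial.  Removing the entries m from a tableau of shape la/mu leaves a tableau of a
   shape nu with la/nu a horizontal strip (branching rule), and removing the x_m-part from a
   monomial of h_n lowers n; so the left-hand side satisfies a recursion in the variables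
   x_1, ..., x_(m-1).  The right-hand side satisfies the same recursion, because adding a
   horizontal strip and then removing one can be traded for removing one and then adding one
   (Fomin's local rule for horizontal strips).  The base case, the constant term, is an
   alternating count of the shapes rho with rho/la horizontal and mu/rho vertical, which a
   sign-reversing involution reduces to [la = mu]. *)

section \<open>Partitions and skew diagrams\<close>

lemma is_partition_antimono: "is_partition la \<Longrightarrow> i \<le> j \<Longrightarrow> la j \<le> la i"
  unfolding is_partition_def by blast

lemma is_partition_finite_support: "is_partition la \<Longrightarrow> finite {i. la i \<noteq> 0}"
  unfolding is_partition_def by blast

lemma is_partitionI:
  assumes "\<And>i. la (Suc i) \<le> la i" and "finite {i. la i \<noteq> 0}"
  shows "is_partition la"
  unfolding is_partition_def
proof (intro conjI allI impI)
  show "la j \<le> la i" if "i \<le> j" for i j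
    using lift_Suc_antimono_le[of la, OF assms(1) that] .
qed (rule assms(2))

lemma finite_support_vanishes:
  fixes f :: "nat \<Rightarrow> nat"
  assumes "finite {i. f i \<noteq> 0}"
  obtains N where "\<And>i. N \<le> i \<Longrightarrow> f i = 0"
proof -
  obtain M where "\<forall>i\<in>{i. f i \<noteq> 0}. i \<le> M"
    using assms unfolding finite_nat_set_iff_bounded_le ..
  then have "\<And>i. Suc M \<le> i \<Longrightarrow> f i = 0" by force
  then show ?thesis by (rule that)
qed

lemma finite_support_if_vanishes_above:
  fixes f :: "nat \<Rightarrow> nat"
  assumes "\<And>i. m < i \<Longrightarrow> f i = 0"
  shows "finite {i. f i \<noteq> 0}"
proof (rule finite_subset)
  show "{i. f i \<noteq> 0} \<subseteq> {..m}"
  proof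
    fix i assume "i \<in> {i. f i \<noteq> 0}"
    then show "i \<in> {..m}" using assms[of i] by (cases "m < i") auto
  qed
qed simp

lemma partitions_vanish_beyond:
  assumes "is_partition la" and "is_partition rho"
  obtains N where "\<And>i. N \<le> i \<Longrightarrow> la i = 0" and "\<And>i. N \<le> i \<Longrightarrow> rho i = 0"
proof -
  obtain N1 N2 where "\<And>i. N1 \<le> i \<Longrightarrow> la i = 0" and "\<And>i. N2 \<le> i \<Longrightarrow> rho i = 0"
    using finite_support_vanishes is_partition_finite_support assms by metis
  then show ?thesis using that[of "max N1 N2"] by simp
qed

lemma finite_pointwise_le:
  fixes g :: "nat \<Rightarrow> nat"
  assumes "finite {i. g i \<noteq> 0}"
  shows "finite {f. \<forall>i. f i \<le> g i}"
proof -
  let ?S = "{i. g i \<noteq> 0}"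
  let ?B = "{..Max (g ` ?S)}"
  have "{f. \<forall>i. f i \<le> g i} \<subseteq> {f. \<forall>i. (i \<in> ?S \<longrightarrow> f i \<in> ?B) \<and> (i \<notin> ?S \<longrightarrow> f i = 0)}"
  proof (intro subsetI CollectI allI conjI impI)
    fix f i assume f: "f \<in> {f. \<forall>i. f i \<le> g i}"
    then have "f i \<le> g i" by simp
    moreover assume "i \<in> ?S"
    then have "g i \<le> Max (g ` ?S)" using assms by simp
    ultimately show "f i \<in> ?B" by simp
  next
    fix f i assume "f \<in> {f. \<forall>i. f i \<le> g i}" and "i \<notin> ?S"
    then show "f i = 0" by (metis (mono_tags) le_zero_eq mem_Collect_eq)
  qed
  moreover have "finite {f. \<forall>i. (i \<in> ?S \<longrightarrow> f i \<in> ?B) \<and> (i \<notin> ?S \<longrightarrow> f i = 0)}"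
    by (rule finite_set_of_finite_funs) (use assms in simp_all)
  ultimately show ?thesis by (rule finite_subset)
qed

definition weight :: "(nat \<Rightarrow> nat) \<Rightarrow> nat" where
  "weight f = (\<Sum>i \<in> {i. f i \<noteq> 0}. f i)"

lemma weight_eq_sum:
  assumes "finite S" and "{i. f i \<noteq> 0} \<subseteq> S"
  shows "weight f = sum f S"
  unfolding weight_def using assms by (intro sum.mono_neutral_left) auto

lemma weight_eq_sum_lessThan:
  assumes "\<And>i. N \<le> i \<Longrightarrow> f i = 0"
  shows "weight f = (\<Sum>i<N. f i)"
proof (rule weight_eq_sum)
  show "{i. f i \<noteq> 0} \<subseteq> {..<N}"
  proof
    fix i assume "i \<in> {i. f i \<noteq> 0}"
    then show "i \<in> {..<N}" using assms[of i] by (cases "N \<le> i") auto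
  qed
qed simp

lemma weight_update:
  assumes "finite {i. f i \<noteq> 0}"
  shows "weight (f(k := v)) + f k = weight f + v"
proof -
  let ?S = "{i. f i \<noteq> 0} - {k}"
  have fin: "finite ?S" and k: "k \<notin> ?S" using assms by auto
  have "weight (f(k := v)) = sum (f(k := v)) (insert k ?S)"
    using fin by (intro weight_eq_sum) auto
  also have "\<dots> = v + sum (f(k := v)) ?S" by (simp only: sum.insert[OF fin k] fun_upd_same)
  also have "sum (f(k := v)) ?S = sum f ?S" by (rule sum.cong) auto
  finally have upd: "weight (f(k := v)) = v + sum f ?S" .
  have "weight f = sum f (insert k ?S)" using fin by (intro weight_eq_sum) auto
  also have "\<dots> = f k + sum f ?S" by (rule sum.insert[OF fin k])
  finally show ?thesis using upd by simp
qed

lemma mem_skew_cells [simp]: "(i, j) \<in> skew_cells la mu \<longleftrightarrow> mu i \<le> j \<and> j < la i"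
  unfolding skew_cells_def by simp

lemma skew_cells_self [simp]: "skew_cells la la = {}"
  by auto

lemma skew_cells_eq_Sigma:
  assumes "{i. la i \<noteq> 0} \<subseteq> S"
  shows "skew_cells la mu = Sigma S (\<lambda>i. {mu i..<la i})"
proof (rule set_eqI, clarify)
  fix i j
  have "j < la i \<Longrightarrow> i \<in> S" using assms by auto
  then show "(i, j) \<in> skew_cells la mu \<longleftrightarrow> (i, j) \<in> Sigma S (\<lambda>i. {mu i..<la i})" by auto
qed

lemma finite_skew_cells: "finite {i. la i \<noteq> 0} \<Longrightarrow> finite (skew_cells la mu)"
  by (simp add: skew_cells_eq_Sigma[OF order_refl])

lemma card_skew_cells:
  assumes "\<And>i. be i \<le> al i" and "finite {i. al i \<noteq> 0}"
  shows "card (skew_cells al be) + weight be = weight al"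
proof -
  let ?S = "{i. al i \<noteq> 0}"
  have "card (skew_cells al be) = (\<Sum>i\<in>?S. al i - be i)"
    using assms(2) by (simp add: skew_cells_eq_Sigma[OF order_refl] card_SigmaI)
  moreover have "weight be = sum be ?S"
  proof (rule weight_eq_sum)
    show "{i. be i \<noteq> 0} \<subseteq> ?S"
    proof
      fix i assume "i \<in> {i. be i \<noteq> 0}"
      then show "i \<in> ?S" using assms(1)[of i] by simp
    qed
  qed (rule assms(2))
  moreover have "weight al = sum al ?S" using assms(2) by (rule weight_eq_sum) simp
  moreover have "(\<Sum>i\<in>?S. al i - be i) + sum be ?S = sum al ?S"
  proof -
    have "(\<Sum>i\<in>?S. al i - be i) + sum be ?S = (\<Sum>i\<in>?S. al i - be i + be i)"
      by (simp only: sum.distrib)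
    also have "\<dots> = sum al ?S" using assms(1) by simp
    finally show ?thesis .
  qed
  ultimately show ?thesis by linarith
qed

lemma card_skew_cells_remove_last:
  assumes "finite {i. al i \<noteq> 0}" and "0 < al k"
  shows "card (skew_cells al (be(k := al k - 1))) = Suc (card (skew_cells al (be(k := al k))))"
proof -
  have eq: "skew_cells al (be(k := al k - 1)) = insert (k, al k - 1) (skew_cells al (be(k := al k)))"
  proof (rule set_eqI, clarify)
    fix i j
    show "(i, j) \<in> skew_cells al (be(k := al k - 1))
      \<longleftrightarrow> (i, j) \<in> insert (k, al k - 1) (skew_cells al (be(k := al k)))"
      using assms(2) by (cases "i = k") auto
  qed
  have "(k, al k - 1) \<notin> skew_cells al (be(k := al k))" by (cases "al k") auto
  then show ?thesis unfolding eq by (rule card_insert_disjoint[OF finite_skew_cells[OF assms(1)]])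
qed

lemma skew_cells_split:
  assumes "\<And>i. mu i \<le> nu i" and "\<And>i. nu i \<le> la i"
  shows "skew_cells la mu = skew_cells la nu \<union> skew_cells nu mu"
proof (rule set_eqI, clarify)
  fix i j
  show "(i, j) \<in> skew_cells la mu \<longleftrightarrow> (i, j) \<in> skew_cells la nu \<union> skew_cells nu mu"
    using assms(1)[of i] assms(2)[of i] by auto
qed

lemma skew_cells_disjoint: "skew_cells la nu \<inter> skew_cells nu mu = {}"
  by auto

lemma card_skew_cells_add:
  assumes "\<And>i. be i \<le> ga i" and "\<And>i. ga i \<le> al i" and "finite {i. al i \<noteq> 0}"
  shows "card (skew_cells al be) = card (skew_cells al ga) + card (skew_cells ga be)"
proof -
  have split: "skew_cells al be = skew_cells al ga \<union> skew_cells ga be"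
    using skew_cells_split assms(1,2) by blast
  have "finite (skew_cells al ga)" and "finite (skew_cells ga be)"
    using finite_skew_cells[OF assms(3), of be] unfolding split by simp_all
  then show ?thesis unfolding split by (rule card_Un_disjoint) (rule skew_cells_disjoint)
qed

section \<open>Horizontal and vertical strips\<close>

definition interlaces :: "(nat \<Rightarrow> nat) \<Rightarrow> (nat \<Rightarrow> nat) \<Rightarrow> bool" where
  "interlaces al be \<longleftrightarrow> (\<forall>i. be i \<le> al i \<and> al (Suc i) \<le> be i)"

lemma interlaces_is_partition_outer:
  assumes "is_partition be" and "interlaces al be"
  shows "is_partition al"
proof (rule is_partitionI)
  show "al (Suc i) \<le> al i" for i
    using assms(2) unfolding interlaces_def by (metis le_trans)
  have "{i. al i \<noteq> 0} \<subseteq> insert 0 (Suc ` {i. be i \<noteq> 0})"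
  proof
    fix i assume "i \<in> {i. al i \<noteq> 0}"
    moreover have "al (Suc j) \<le> be j" for j using assms(2) unfolding interlaces_def by blast
    ultimately show "i \<in> insert 0 (Suc ` {i. be i \<noteq> 0})"
      by (cases i) (auto simp: image_iff, metis less_le_trans)
  qed
  then show "finite {i. al i \<noteq> 0}"
    by (rule finite_subset) (use is_partition_finite_support[OF assms(1)] in simp)
qed

lemma interlaces_is_partition_inner:
  assumes "is_partition al" and "interlaces al be"
  shows "is_partition be"
proof (rule is_partitionI)
  fix i
  have "be (Suc i) \<le> al (Suc i)" and "al (Suc i) \<le> be i"
    using assms(2) unfolding interlaces_def by blast+
  then show "be (Suc i) \<le> be i" by simp
next
  have "{i. be i \<noteq> 0} \<subseteq> {i. al i \<noteq> 0}"
  proof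
    fix i assume "i \<in> {i. be i \<noteq> 0}"
    moreover have "be i \<le> al i" using assms(2) unfolding interlaces_def by blast
    ultimately show "i \<in> {i. al i \<noteq> 0}" by simp
  qed
  then show "finite {i. be i \<noteq> 0}"
    by (rule finite_subset) (rule is_partition_finite_support[OF assms(1)])
qed

lemma horizontal_strip_iff:
  "horizontal_strip al be k \<longleftrightarrow> is_partition be \<and> interlaces al be \<and> card (skew_cells al be) = k"
proof
  assume h: "horizontal_strip al be k"
  then have al: "is_partition al" and be: "is_partition be" and sub: "\<And>i. be i \<le> al i"
    and col: "\<And>i i' j. (i, j) \<in> skew_cells al be \<Longrightarrow> (i', j) \<in> skew_cells al be \<Longrightarrow> i = i'"
    unfolding horizontal_strip_def part_subseteq_def by blast+
  have "al (Suc i) \<le> be i" for i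
  proof (rule ccontr)
    assume "\<not> al (Suc i) \<le> be i"
    moreover have "al (Suc i) \<le> al i" and "be (Suc i) \<le> be i"
      using is_partition_antimono[OF al] is_partition_antimono[OF be] by simp_all
    ultimately have "(i, be i) \<in> skew_cells al be" and "(Suc i, be i) \<in> skew_cells al be" by simp_all
    then show False using col by fastforce
  qed
  then show "is_partition be \<and> interlaces al be \<and> card (skew_cells al be) = k"
    using h be sub unfolding horizontal_strip_def interlaces_def by blast
next
  assume "is_partition be \<and> interlaces al be \<and> card (skew_cells al be) = k"
  then have be: "is_partition be" and il: "interlaces al be" and k: "card (skew_cells al be) = k"
    by blast+
  have al: "is_partition al" using interlaces_is_partition_outer[OF be il] .
  have no_lower: False if "(i, j) \<in> skew_cells al be" "(i', j) \<in> skew_cells al be" "i < i'" for i i' j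
  proof -
    have "al i' \<le> al (Suc i)" using is_partition_antimono[OF al] that(3) by simp
    also have "\<dots> \<le> be i" using il unfolding interlaces_def by blast
    finally show False using that(1,2) by simp
  qed
  have "i = i'" if "(i, j) \<in> skew_cells al be" "(i', j) \<in> skew_cells al be" for i i' j
    using no_lower[OF that] no_lower[OF that(2,1)] by (cases i i' rule: linorder_cases) auto
  moreover have "part_subseteq be al" using il unfolding interlaces_def part_subseteq_def by blast
  ultimately show "horizontal_strip al be k" unfolding horizontal_strip_def using al be k by blast
qed

lemma vertical_strip_iff:
  "vertical_strip al be k \<longleftrightarrow> is_partition al \<and> is_partition be
     \<and> (\<forall>i. be i \<le> al i \<and> al i \<le> Suc (be i)) \<and> card (skew_cells al be) = k"
proof -
  have "(\<forall>i j j'. (i, j) \<in> skew_cells al be \<longrightarrow> (i, j') \<in> skew_cells al be \<longrightarrow> j = j')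
      \<longleftrightarrow> (\<forall>i. al i \<le> Suc (be i))" (is "?row \<longleftrightarrow> ?thin")
  proof
    assume ?row
    show ?thin
    proof (rule allI, rule ccontr)
      fix i assume "\<not> al i \<le> Suc (be i)"
      then have "(i, be i) \<in> skew_cells al be" and "(i, Suc (be i)) \<in> skew_cells al be" by simp_all
      then show False using \<open>?row\<close> by fastforce
    qed
  next
    assume thin: ?thin
    show ?row
    proof (intro allI impI)
      fix i j j' assume "(i, j) \<in> skew_cells al be" and "(i, j') \<in> skew_cells al be"
      then show "j = j'" using thin[rule_format, of i] by simp
    qed
  qed
  then show ?thesis unfolding vertical_strip_def part_subseteq_def by blast
qed

lemma finite_horizontal_strips_inner:
  assumes "is_partition la"
  shows "finite {nu. horizontal_strip la nu r}"
proof (rule finite_subset)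
  show "{nu. horizontal_strip la nu r} \<subseteq> {f. \<forall>i. f i \<le> la i}"
    unfolding horizontal_strip_def part_subseteq_def by blast
qed (rule finite_pointwise_le[OF is_partition_finite_support[OF assms]])

lemma finite_vertical_strips_inner:
  assumes "is_partition mu"
  shows "finite {mm. vertical_strip mu mm k}"
proof (rule finite_subset)
  show "{mm. vertical_strip mu mm k} \<subseteq> {f. \<forall>i. f i \<le> mu i}"
    unfolding vertical_strip_def part_subseteq_def by blast
qed (rule finite_pointwise_le[OF is_partition_finite_support[OF assms]])

lemma finite_horizontal_strips_outer:
  assumes la: "is_partition la"
  shows "finite {lp. horizontal_strip lp la s}"
proof (rule finite_subset)
  define g where "g i = (if i = 0 then la 0 + s else la (i - 1))" for i
  show "{lp. horizontal_strip lp la s} \<subseteq> {f. \<forall>i. f i \<le> g i}"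
  proof (intro subsetI CollectI allI)
    fix lp i assume "lp \<in> {lp. horizontal_strip lp la s}"
    then have il: "interlaces lp la" and s: "card (skew_cells lp la) = s"
      unfolding horizontal_strip_iff by blast+
    show "lp i \<le> g i"
    proof (cases i)
      case 0
      have "{0} \<times> {la 0..<lp 0} \<subseteq> skew_cells lp la" by auto
      then have "card ({0::nat} \<times> {la 0..<lp 0}) \<le> s"
        using s card_mono[OF finite_skew_cells] is_partition_finite_support
          interlaces_is_partition_outer[OF la il] by metis
      then show ?thesis using 0 unfolding g_def by (simp add: card_cartesian_product)
    next
      case (Suc k)
      then show ?thesis using il unfolding g_def interlaces_def by simp
    qed
  qed
  have "{i. g i \<noteq> 0} \<subseteq> insert 0 (Suc ` {i. la i \<noteq> 0})"
  proof
    fix i assume "i \<in> {i. g i \<noteq> 0}"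
    then show "i \<in> insert 0 (Suc ` {i. la i \<noteq> 0})" unfolding g_def by (cases i) auto
  qed
  then have "finite {i. g i \<noteq> 0}"
    by (rule finite_subset) (use is_partition_finite_support[OF la] in simp)
  then show "finite {f. \<forall>i. f i \<le> g i}" by (rule finite_pointwise_le)
qed

lemma is_partition_empty: "is_partition empty_partition"
  unfolding is_partition_def empty_partition_def by simp

lemma vertical_strip_empty_iff:
  "vertical_strip empty_partition mm k \<longleftrightarrow> mm = empty_partition \<and> k = 0"
proof
  assume "vertical_strip empty_partition mm k"
  then have "part_subseteq mm empty_partition" and "card (skew_cells empty_partition mm) = k"
    unfolding vertical_strip_def by blast+
  moreover from \<open>part_subseteq mm empty_partition\<close> have "mm = empty_partition"
    unfolding part_subseteq_def empty_partition_def by (simp add: fun_eq_iff)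
  ultimately show "mm = empty_partition \<and> k = 0" by simp
next
  assume "mm = empty_partition \<and> k = 0"
  then show "vertical_strip empty_partition mm k"
    unfolding vertical_strip_iff using is_partition_empty by simp
qed

lemma horizontal_strip_empty_iff:
  "horizontal_strip lp empty_partition n \<longleftrightarrow> lp = row_partition n"
proof -
  have card: "card (skew_cells lp empty_partition) = lp 0" if "\<And>i. lp (Suc i) = 0" for lp
  proof -
    have "skew_cells lp empty_partition = {0} \<times> {..<lp 0}"
    proof (rule set_eqI, clarify)
      fix i j show "(i, j) \<in> skew_cells lp empty_partition \<longleftrightarrow> (i, j) \<in> {0} \<times> {..<lp 0}"
        using that by (cases i) (simp_all add: empty_partition_def)
    qed
    then show ?thesis by simp
  qed
  have "interlaces lp empty_partition \<longleftrightarrow> (\<forall>i. lp (Suc i) = 0)"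
    unfolding interlaces_def empty_partition_def by simp
  moreover have "(\<forall>i. lp (Suc i) = 0) \<and> lp 0 = n \<longleftrightarrow> lp = row_partition n"
  proof
    assume row: "(\<forall>i. lp (Suc i) = 0) \<and> lp 0 = n"
    show "lp = row_partition n"
    proof
      fix i show "lp i = row_partition n i" using row unfolding row_partition_def by (cases i) auto
    qed
  qed (simp add: row_partition_def)
  ultimately show ?thesis
    unfolding horizontal_strip_iff using is_partition_empty card by (auto simp: row_partition_def)
qed

section \<open>Coefficients of skew Schur functions\<close>

definition content :: "(nat \<Rightarrow> nat) \<Rightarrow> (nat \<Rightarrow> nat) \<Rightarrow> (nat \<times> nat \<Rightarrow> nat) \<Rightarrow> nat \<Rightarrow> nat" where
  "content la mu T k = card {c \<in> skew_cells la mu. T c = k}"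

definition tableaux :: "(nat \<Rightarrow> nat) \<Rightarrow> (nat \<Rightarrow> nat) \<Rightarrow> (nat \<Rightarrow> nat) \<Rightarrow> (nat \<times> nat \<Rightarrow> nat) set" where
  "tableaux la mu p = {T. ssyt la mu T \<and> content la mu T = p}"

(* Coefficient of x^p in s_{la/mu}.  The guard makes it vanish unless mu \<subseteq> la: skew_cells
   alone would silently drop the rows with mu i > la i. *)
definition schur_coeff :: "(nat \<Rightarrow> nat) \<Rightarrow> (nat \<Rightarrow> nat) \<Rightarrow> (nat \<Rightarrow> nat) \<Rightarrow> int" where
  "schur_coeff la mu p = (if part_subseteq mu la then int (card (tableaux la mu p)) else 0)"

lemma skew_schur_eq_schur_coeff:
  "part_subseteq mu la \<Longrightarrow> skew_schur la mu a = schur_coeff la mu (Poly_Mapping.lookup a)"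
  unfolding skew_schur_def schur_coeff_def tableaux_def content_def by (simp add: fun_eq_iff eq_commute)

lemma tableau_entry_in_support:
  assumes "T \<in> tableaux la mu p" and "c \<in> skew_cells la mu" and "finite (skew_cells la mu)"
  shows "p (T c) \<noteq> 0"
proof -
  have "{c' \<in> skew_cells la mu. T c' = T c} \<noteq> {}" using assms(2) by blast
  then have "content la mu T (T c) \<noteq> 0" unfolding content_def using assms(3) by simp
  then show ?thesis using assms(1) unfolding tableaux_def by simp
qed

lemma finite_tableaux:
  assumes "is_partition la" and "finite {i. p i \<noteq> 0}"
  shows "finite (tableaux la mu p)"
proof (rule finite_subset)
  let ?C = "skew_cells la mu"
  have fin: "finite ?C" using finite_skew_cells[OF is_partition_finite_support[OF assms(1)]] .
  show "tableaux la mu p \<subseteq> {T. \<forall>c. (c \<in> ?C \<longrightarrow> T c \<in> {i. p i \<noteq> 0}) \<and> (c \<notin> ?C \<longrightarrow> T c = 0)}"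
    using tableau_entry_in_support[OF _ _ fin] unfolding tableaux_def ssyt_def by blast
  show "finite {T. \<forall>c. (c \<in> ?C \<longrightarrow> T c \<in> {i. p i \<noteq> 0}) \<and> (c \<notin> ?C \<longrightarrow> T c = 0)}"
    using fin assms(2) by (rule finite_set_of_finite_funs)
qed

lemma schur_coeff_same: "schur_coeff la la q = (if q = (\<lambda>_. 0) then 1 else 0)"
proof -
  have "tableaux la la q = (if q = (\<lambda>_. 0) then {\<lambda>_. 0} else {})"
    unfolding tableaux_def ssyt_def content_def by (auto simp: fun_eq_iff)
  then show ?thesis unfolding schur_coeff_def part_subseteq_def by simp
qed

lemma schur_coeff_zero_content:
  assumes "is_partition la"
  shows "schur_coeff la mu (\<lambda>_. 0) = (if la = mu then 1 else 0)"
proof (cases "la = mu")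
  case True
  then show ?thesis using schur_coeff_same[of la "\<lambda>_. 0"] by simp
next
  case False
  show ?thesis
  proof (cases "part_subseteq mu la")
    case True
    then obtain i where "mu i < la i"
      using \<open>la \<noteq> mu\<close> unfolding part_subseteq_def by (metis ext le_neq_implies_less)
    then have "(i, mu i) \<in> skew_cells la mu" by simp
    then have "tableaux la mu (\<lambda>_. 0) = {}"
      using tableau_entry_in_support finite_skew_cells[OF is_partition_finite_support[OF assms]] by blast
    then show ?thesis using False unfolding schur_coeff_def by simp
  qed (use False in \<open>simp add: schur_coeff_def\<close>)
qed

lemma schur_coeff_eq_0_if_x0:
  assumes "p 0 \<noteq> 0"
  shows "schur_coeff la mu p = 0"
proof -
  have "tableaux la mu p = {}"
  proof (rule equals0I)
    fix T assume "T \<in> tableaux la mu p"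
    then have "p 0 = card {c \<in> skew_cells la mu. T c = 0}" and "\<forall>c \<in> skew_cells la mu. 1 \<le> T c"
      unfolding tableaux_def ssyt_def content_def by auto
    then show False using assms by (metis (mono_tags, lifting) Collect_empty_eq card.empty not_one_le_zero)
  qed
  then show ?thesis unfolding schur_coeff_def by simp
qed

section \<open>The branching rule\<close>

definition fill_cells :: "(nat \<times> nat) set \<Rightarrow> nat \<Rightarrow> (nat \<times> nat \<Rightarrow> nat) \<Rightarrow> nat \<times> nat \<Rightarrow> nat" where
  "fill_cells C m T c = (if c \<in> C then m else T c)"

definition remove_entry :: "nat \<Rightarrow> (nat \<times> nat \<Rightarrow> nat) \<Rightarrow> nat \<times> nat \<Rightarrow> nat" where
  "remove_entry m T c = (if T c = m then 0 else T c)"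

(* In every row the entries equal to the largest entry m form a final segment, so removing
   them leaves a skew shape nu/mu; shape_below gives nu. *)
definition shape_below :: "(nat \<Rightarrow> nat) \<Rightarrow> (nat \<Rightarrow> nat) \<Rightarrow> nat \<Rightarrow> (nat \<times> nat \<Rightarrow> nat) \<Rightarrow> nat \<Rightarrow> nat" where
  "shape_below la mu m T i = la i - card {j. mu i \<le> j \<and> j < la i \<and> T (i, j) = m}"

lemma remove_entry_neq: "0 < m \<Longrightarrow> remove_entry m T c \<noteq> m"
  unfolding remove_entry_def by simp

lemma content_remove_entry_at: "0 < m \<Longrightarrow> content la mu (remove_entry m T) m = 0"
  unfolding content_def using remove_entry_neq by simp

lemma content_fill_cells:
  assumes "\<And>i. mu i \<le> nu i" and "\<And>i. nu i \<le> la i"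
    and "\<And>c. c \<in> skew_cells nu mu \<Longrightarrow> T c \<noteq> m"
  shows "content la mu (fill_cells (skew_cells la nu) m T) = (content nu mu T)(m := card (skew_cells la nu))"
proof
  fix k
  let ?F = "fill_cells (skew_cells la nu) m T"
  have split: "skew_cells la mu = skew_cells la nu \<union> skew_cells nu mu"
    using skew_cells_split assms(1,2) by blast
  show "content la mu ?F k = ((content nu mu T)(m := card (skew_cells la nu))) k"
  proof (cases "k = m")
    case True
    then have "{c \<in> skew_cells la mu. ?F c = k} = skew_cells la nu"
      using split assms(3) unfolding fill_cells_def by auto
    then show ?thesis using True unfolding content_def by simp
  next
    case False
    then have "{c \<in> skew_cells la mu. ?F c = k} = {c \<in> skew_cells nu mu. T c = k}"
      using split skew_cells_disjoint[of la nu mu] unfolding fill_cells_def by auto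
    then show ?thesis using False unfolding content_def by simp
  qed
qed

lemma ssyt_fill_horizontal_strip:
  assumes nu: "is_partition nu" and il: "interlaces la nu" and mu_nu: "\<And>i. mu i \<le> nu i"
    and T: "ssyt nu mu T" and less: "\<And>c. c \<in> skew_cells nu mu \<Longrightarrow> T c < m" and "0 < m"
  shows "ssyt la mu (fill_cells (skew_cells la nu) m T)"
proof -
  let ?F = "fill_cells (skew_cells la nu) m T"
  have la: "is_partition la" using interlaces_is_partition_outer[OF nu il] .
  have nu_la: "\<And>i. nu i \<le> la i" and la_nu: "\<And>i. la (Suc i) \<le> nu i"
    using il unfolding interlaces_def by blast+
  have split: "c \<in> skew_cells la mu \<longleftrightarrow> c \<in> skew_cells la nu \<or> c \<in> skew_cells nu mu" for c
    using skew_cells_split mu_nu nu_la by blast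
  have strip: "c \<in> skew_cells la nu \<Longrightarrow> ?F c = m" and rest: "c \<notin> skew_cells la nu \<Longrightarrow> ?F c = T c" for c
    unfolding fill_cells_def by simp_all
  have F_le: "?F c \<le> m" if "c \<in> skew_cells la mu" for c
    using that split[of c] strip[of c] rest[of c] less[of c] skew_cells_disjoint[of la nu mu]
    by (cases "c \<in> skew_cells la nu") auto
  from T have zero: "\<And>c. c \<notin> skew_cells nu mu \<Longrightarrow> T c = 0"
    and pos: "\<And>c. c \<in> skew_cells nu mu \<Longrightarrow> 1 \<le> T c"
    and row: "\<And>i j j'. (i, j) \<in> skew_cells nu mu \<Longrightarrow> (i, j') \<in> skew_cells nu mu \<Longrightarrow> j \<le> j' \<Longrightarrow> T (i, j) \<le> T (i, j')"
    and col: "\<And>i i' j. (i, j) \<in> skew_cells nu mu \<Longrightarrow> (i', j) \<in> skew_cells nu mu \<Longrightarrow> i < i' \<Longrightarrow> T (i, j) < T (i', j)"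
    unfolding ssyt_def by blast+
  show ?thesis
    unfolding ssyt_def
  proof (intro conjI allI impI ballI)
    fix c assume "c \<notin> skew_cells la mu"
    then show "?F c = 0" using split[of c] rest zero by simp
  next
    fix c assume "c \<in> skew_cells la mu"
    then show "1 \<le> ?F c" using split[of c] strip rest pos \<open>0 < m\<close>
      by (cases "c \<in> skew_cells la nu") auto
  next
    fix i j j' assume ij: "(i, j) \<in> skew_cells la mu" and ij': "(i, j') \<in> skew_cells la mu" and "j \<le> j'"
    show "?F (i, j) \<le> ?F (i, j')"
    proof (cases "(i, j') \<in> skew_cells la nu")
      case True
      then show ?thesis using F_le[OF ij] strip by simp
    next
      case False
      then have "(i, j') \<in> skew_cells nu mu" using split ij' by blast
      then have "(i, j) \<in> skew_cells nu mu" using ij \<open>j \<le> j'\<close> by simp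
      then show ?thesis using row \<open>(i, j') \<in> skew_cells nu mu\<close> \<open>j \<le> j'\<close> rest by simp
    qed
  next
    fix i i' j assume ij: "(i, j) \<in> skew_cells la mu" and i'j: "(i', j) \<in> skew_cells la mu" and "i < i'"
    show "?F (i, j) < ?F (i', j)"
    proof (cases "(i', j) \<in> skew_cells la nu")
      case True
      have "la i' \<le> la (Suc i)" using is_partition_antimono[OF la] \<open>i < i'\<close> by simp
      then have "j < nu i" using True la_nu[of i] by simp
      then have "(i, j) \<in> skew_cells nu mu" using ij by simp
      then show ?thesis using less strip[OF True] rest by simp
    next
      case False
      then have i'j_nu: "(i', j) \<in> skew_cells nu mu" using split i'j by blast
      moreover have "nu i' \<le> nu i" using is_partition_antimono[OF nu] \<open>i < i'\<close> by simp
      ultimately have "(i, j) \<in> skew_cells nu mu" using ij by simp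
      then show ?thesis using col i'j_nu \<open>i < i'\<close> rest by simp
    qed
  qed
qed

lemma upward_closed_eq_atLeastLessThan:
  fixes S :: "nat set"
  assumes "S \<subseteq> {a..<b}" and "\<And>j j'. j \<in> S \<Longrightarrow> j \<le> j' \<Longrightarrow> j' < b \<Longrightarrow> j' \<in> S"
  shows "S = {b - card S..<b}"
proof (cases "S = {}")
  case False
  have fin: "finite S" using assms(1) finite_subset by blast
  define x where "x = Min S"
  have xS: "x \<in> S" using False fin unfolding x_def by simp
  have "S = {x..<b}"
  proof
    show "S \<subseteq> {x..<b}" using assms(1) fin unfolding x_def by auto
    show "{x..<b} \<subseteq> S" using assms(2) xS by auto
  qed
  moreover have "x \<le> b" using xS assms(1) by auto
  ultimately show ?thesis by simp
qed simp

lemma shape_below_cells: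
  assumes T: "ssyt la mu T" and sub: "part_subseteq mu la"
    and le: "\<And>c. c \<in> skew_cells la mu \<Longrightarrow> T c \<le> m"
  defines "nu \<equiv> shape_below la mu m T"
  shows "\<forall>i. mu i \<le> nu i \<and> nu i \<le> la i" and "skew_cells la nu = {c \<in> skew_cells la mu. T c = m}"
proof -
  define R where "R i = {j. mu i \<le> j \<and> j < la i \<and> T (i, j) = m}" for i
  have R_sub: "R i \<subseteq> {mu i..<la i}" for i unfolding R_def by auto
  have R_eq: "R i = {la i - card (R i)..<la i}" for i
  proof (rule upward_closed_eq_atLeastLessThan[OF R_sub])
    fix j j' assume "j \<in> R i" "j \<le> j'" "j' < la i"
    moreover have "T (i, j) \<le> T (i, j')" if "(i, j) \<in> skew_cells la mu" "(i, j') \<in> skew_cells la mu"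
      using T that \<open>j \<le> j'\<close> unfolding ssyt_def by blast
    ultimately show "j' \<in> R i" using le[of "(i, j')"] unfolding R_def by fastforce
  qed
  have nu_eq: "nu i = la i - card (R i)" for i unfolding nu_def shape_below_def R_def ..
  have "card (R i) \<le> la i - mu i" for i using card_mono[OF _ R_sub[of i]] by simp
  then show "\<forall>i. mu i \<le> nu i \<and> nu i \<le> la i"
    using sub unfolding nu_eq part_subseteq_def by (metis diff_diff_cancel diff_le_mono2 diff_le_self)
  show "skew_cells la nu = {c \<in> skew_cells la mu. T c = m}"
  proof (rule set_eqI, clarify)
    fix i j
    have "(i, j) \<in> skew_cells la nu \<longleftrightarrow> j \<in> R i" using R_eq[of i] nu_eq[of i] by auto
    then show "(i, j) \<in> skew_cells la nu \<longleftrightarrow> (i, j) \<in> {c \<in> skew_cells la mu. T c = m}"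
      unfolding R_def by auto
  qed
qed

lemma shape_below_interlaces:
  assumes la: "is_partition la" and mu: "is_partition mu" and T: "ssyt la mu T"
    and sub: "part_subseteq mu la" and le: "\<And>c. c \<in> skew_cells la mu \<Longrightarrow> T c \<le> m"
  shows "interlaces la (shape_below la mu m T)"
proof -
  let ?nu = "shape_below la mu m T"
  have bounds: "\<And>i. mu i \<le> ?nu i \<and> ?nu i \<le> la i"
    and strip: "skew_cells la ?nu = {c \<in> skew_cells la mu. T c = m}"
    using shape_below_cells[OF T sub le] by blast+
  have col: "T (i, j) < T (Suc i, j)" if "(i, j) \<in> skew_cells la mu" "(Suc i, j) \<in> skew_cells la mu" for i j
    using T that unfolding ssyt_def by blast
  have "la (Suc i) \<le> ?nu i" for i
  proof (rule ccontr)
    assume "\<not> la (Suc i) \<le> ?nu i"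
    moreover have "la (Suc i) \<le> la i" and "mu (Suc i) \<le> mu i"
      using is_partition_antimono la mu by simp_all
    ultimately have "(i, ?nu i) \<in> skew_cells la ?nu" and below: "(Suc i, ?nu i) \<in> skew_cells la mu"
      using bounds[of i] by simp_all
    then have "T (i, ?nu i) = m" and "(i, ?nu i) \<in> skew_cells la mu" using strip by auto
    then show False using col[of i "?nu i"] le[OF below] below by simp
  qed
  then show ?thesis using bounds unfolding interlaces_def by blast
qed

lemma ssyt_remove_entry:
  assumes T: "ssyt la mu T" and bounds: "\<And>i. mu i \<le> nu i \<and> nu i \<le> la i"
    and strip: "skew_cells la nu = {c \<in> skew_cells la mu. T c = m}"
  shows "ssyt nu mu (remove_entry m T)"
proof -
  have split: "c \<in> skew_cells la mu \<longleftrightarrow> c \<in> skew_cells la nu \<or> c \<in> skew_cells nu mu" for c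
    using skew_cells_split bounds by blast
  have zero: "\<And>c. c \<notin> skew_cells la mu \<Longrightarrow> T c = 0"
    and pos: "\<And>c. c \<in> skew_cells la mu \<Longrightarrow> 1 \<le> T c"
    and row: "\<And>i j j'. (i, j) \<in> skew_cells la mu \<Longrightarrow> (i, j') \<in> skew_cells la mu \<Longrightarrow> j \<le> j' \<Longrightarrow> T (i, j) \<le> T (i, j')"
    and col: "\<And>i i' j. (i, j) \<in> skew_cells la mu \<Longrightarrow> (i', j) \<in> skew_cells la mu \<Longrightarrow> i < i' \<Longrightarrow> T (i, j) < T (i', j)"
    using T unfolding ssyt_def by blast+
  have below: "c \<in> skew_cells nu mu \<Longrightarrow> remove_entry m T c = T c \<and> c \<in> skew_cells la mu" for c
    using split[of c] strip skew_cells_disjoint[of la nu mu] unfolding remove_entry_def by auto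
  show ?thesis
    unfolding ssyt_def
  proof (intro conjI allI impI ballI)
    fix c assume "c \<notin> skew_cells nu mu"
    show "remove_entry m T c = 0"
    proof (cases "c \<in> skew_cells la nu")
      case True
      then show ?thesis using strip unfolding remove_entry_def by simp
    next
      case False
      then have "T c = 0" using split[of c] \<open>c \<notin> skew_cells nu mu\<close> zero by blast
      then show ?thesis unfolding remove_entry_def by simp
    qed
  next
    fix c assume "c \<in> skew_cells nu mu"
    then show "1 \<le> remove_entry m T c" using below pos by simp
  next
    fix i j j' assume a: "(i, j) \<in> skew_cells nu mu" "(i, j') \<in> skew_cells nu mu" "j \<le> j'"
    then show "remove_entry m T (i, j) \<le> remove_entry m T (i, j')"
      using below[OF a(1)] below[OF a(2)] row[of i j j'] by simp
  next
    fix i i' j assume a: "(i, j) \<in> skew_cells nu mu" "(i', j) \<in> skew_cells nu mu" "i < i'"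
    then show "remove_entry m T (i, j) < remove_entry m T (i', j)"
      using below[OF a(1)] below[OF a(2)] col[of i j i'] by simp
  qed
qed

lemma fill_cells_remove_entry:
  assumes "ssyt la mu T" and "skew_cells la nu = {c \<in> skew_cells la mu. T c = m}" and "0 < m"
  shows "fill_cells (skew_cells la nu) m (remove_entry m T) = T"
proof
  fix c
  have "c \<notin> skew_cells la mu \<Longrightarrow> T c = 0" using assms(1) unfolding ssyt_def by blast
  then have "c \<in> skew_cells la nu \<longleftrightarrow> T c = m" using assms(2,3) by auto
  then show "fill_cells (skew_cells la nu) m (remove_entry m T) c = T c"
    unfolding fill_cells_def remove_entry_def by simp
qed

lemma shape_below_fill_cells:
  assumes il: "interlaces la nu" and mu_nu: "\<And>i. mu i \<le> nu i" and T: "ssyt nu mu T"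
    and less: "\<And>c. c \<in> skew_cells nu mu \<Longrightarrow> T c < m" and "0 < m"
  shows "shape_below la mu m (fill_cells (skew_cells la nu) m T) = nu"
    and "remove_entry m (fill_cells (skew_cells la nu) m T) = T"
proof -
  let ?F = "fill_cells (skew_cells la nu) m T"
  have nu_la: "\<And>i. nu i \<le> la i" using il unfolding interlaces_def by blast
  have zero: "\<And>c. c \<notin> skew_cells nu mu \<Longrightarrow> T c = 0" using T unfolding ssyt_def by blast
  show "shape_below la mu m ?F = nu"
  proof
    fix i
    have "{j. mu i \<le> j \<and> j < la i \<and> ?F (i, j) = m} = {nu i..<la i}"
    proof (rule set_eqI)
      fix j
      have "mu i \<le> j \<Longrightarrow> j < nu i \<Longrightarrow> T (i, j) < m" using less[of "(i, j)"] by simp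
      then show "j \<in> {j. mu i \<le> j \<and> j < la i \<and> ?F (i, j) = m} \<longleftrightarrow> j \<in> {nu i..<la i}"
        using mu_nu[of i] unfolding fill_cells_def by auto
    qed
    then show "shape_below la mu m ?F i = nu i"
      unfolding shape_below_def using nu_la[of i] by simp
  qed
  show "remove_entry m ?F = T"
  proof
    fix c
    have "T c \<noteq> m" using less[of c] zero[of c] \<open>0 < m\<close> by (cases "c \<in> skew_cells nu mu") auto
    moreover have "c \<in> skew_cells la nu \<Longrightarrow> T c = 0"
      using zero skew_cells_disjoint[of la nu mu] by blast
    ultimately show "remove_entry m ?F c = T c" unfolding remove_entry_def fill_cells_def by auto
  qed
qed

lemma tableaux_remove_largest:
  assumes la: "is_partition la" and mu: "is_partition mu" and sub: "part_subseteq mu la"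
    and "0 < m" and above: "\<And>i. m < i \<Longrightarrow> p i = 0" and T: "T \<in> tableaux la mu p"
  defines "nu \<equiv> shape_below la mu m T"
  shows "horizontal_strip la nu (p m) \<and> part_subseteq mu nu
    \<and> remove_entry m T \<in> tableaux nu mu (p(m := 0)) \<and> fill_cells (skew_cells la nu) m (remove_entry m T) = T"
proof -
  let ?T' = "remove_entry m T"
  have le: "T c \<le> m" if "c \<in> skew_cells la mu" for c
  proof -
    have "p (T c) \<noteq> 0"
      using tableau_entry_in_support[OF T that finite_skew_cells[OF is_partition_finite_support[OF la]]] .
    then show ?thesis using above[of "T c"] by (cases "m < T c") auto
  qed
  have T_ssyt: "ssyt la mu T" using T unfolding tableaux_def by simp
  have bounds: "\<And>i. mu i \<le> nu i \<and> nu i \<le> la i"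
    and strip: "skew_cells la nu = {c \<in> skew_cells la mu. T c = m}"
    unfolding nu_def using shape_below_cells[OF T_ssyt sub le] by blast+
  have il: "interlaces la nu" unfolding nu_def using la mu T_ssyt sub le by (rule shape_below_interlaces)
  have sub': "part_subseteq mu nu" using bounds unfolding part_subseteq_def by blast
  have T': "ssyt nu mu ?T'" using T_ssyt bounds strip by (rule ssyt_remove_entry)
  have fill: "fill_cells (skew_cells la nu) m ?T' = T"
    using T_ssyt strip \<open>0 < m\<close> by (rule fill_cells_remove_entry)
  have mu_nu: "\<And>i. mu i \<le> nu i" using sub' unfolding part_subseteq_def by blast
  have nu_la: "\<And>i. nu i \<le> la i" using il unfolding interlaces_def by blast
  have "content la mu (fill_cells (skew_cells la nu) m ?T') = (content nu mu ?T')(m := card (skew_cells la nu))"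
    by (rule content_fill_cells[of mu nu la, OF mu_nu nu_la]) (rule remove_entry_neq[OF \<open>0 < m\<close>])
  then have p: "p = (content nu mu ?T')(m := card (skew_cells la nu))"
    using T unfolding fill tableaux_def by simp
  have "content nu mu ?T' = p(m := 0)"
  proof
    fix k show "content nu mu ?T' k = (p(m := 0)) k"
      using content_remove_entry_at[OF \<open>0 < m\<close>, of nu mu T] by (cases "k = m") (simp_all add: p)
  qed
  moreover have "horizontal_strip la nu (p m)"
    unfolding horizontal_strip_iff using interlaces_is_partition_inner[OF la il] il by (simp add: p)
  ultimately show ?thesis using sub' T' fill unfolding tableaux_def by blast
qed

lemma tableaux_fill_strip:
  assumes "0 < m" and above: "\<And>i. m < i \<Longrightarrow> p i = 0"
    and hs: "horizontal_strip la nu (p m)" and sub: "part_subseteq mu nu"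
    and T': "T' \<in> tableaux nu mu (p(m := 0))"
  defines "T \<equiv> fill_cells (skew_cells la nu) m T'"
  shows "T \<in> tableaux la mu p \<and> shape_below la mu m T = nu \<and> remove_entry m T = T'"
proof -
  have nu: "is_partition nu" and il: "interlaces la nu" and card: "card (skew_cells la nu) = p m"
    using hs unfolding horizontal_strip_iff by blast+
  have mu_nu: "\<And>i. mu i \<le> nu i" and nu_la: "\<And>i. nu i \<le> la i"
    using sub il unfolding part_subseteq_def interlaces_def by blast+
  have ssyt': "ssyt nu mu T'" using T' unfolding tableaux_def by blast
  have less: "T' c < m" if "c \<in> skew_cells nu mu" for c
  proof -
    have "(p(m := 0)) (T' c) \<noteq> 0"
      using tableau_entry_in_support[OF T' that finite_skew_cells[OF is_partition_finite_support[OF nu]]] .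
    then show ?thesis using above by (metis fun_upd_apply linorder_neqE_nat)
  qed
  have "ssyt la mu T"
    unfolding T_def using ssyt_fill_horizontal_strip[OF nu il mu_nu ssyt' less \<open>0 < m\<close>] .
  moreover have "content la mu T = p"
  proof -
    have "\<And>c. c \<in> skew_cells nu mu \<Longrightarrow> T' c \<noteq> m" using less by (simp add: less_imp_neq)
    then have "content la mu T = (content nu mu T')(m := card (skew_cells la nu))"
      unfolding T_def by (rule content_fill_cells[of mu nu la, OF mu_nu nu_la])
    then show ?thesis using card T' unfolding tableaux_def by (auto simp: fun_eq_iff)
  qed
  ultimately show ?thesis
    using shape_below_fill_cells[OF il mu_nu ssyt' less \<open>0 < m\<close>] unfolding T_def tableaux_def by blast
qed

lemma card_tableaux_branching:
  assumes la: "is_partition la" and mu: "is_partition mu" and sub: "part_subseteq mu la"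
    and "0 < m" and above: "\<And>i. m < i \<Longrightarrow> p i = 0"
  shows "card (tableaux la mu p)
    = (\<Sum>nu | horizontal_strip la nu (p m) \<and> part_subseteq mu nu. card (tableaux nu mu (p(m := 0))))"
proof -
  let ?p' = "p(m := 0)"
  let ?H = "{nu. horizontal_strip la nu (p m) \<and> part_subseteq mu nu}"
  have fin_H: "finite ?H"
    using finite_horizontal_strips_inner[OF la] by (rule rev_finite_subset) blast
  have fin_T: "finite (tableaux nu mu ?p')" if "nu \<in> ?H" for nu
    using that by (intro finite_tableaux finite_support_if_vanishes_above[of m]) (auto simp: horizontal_strip_def above)
  have fwd: "(shape_below la mu m T, remove_entry m T) \<in> Sigma ?H (\<lambda>nu. tableaux nu mu ?p')
      \<and> fill_cells (skew_cells la (shape_below la mu m T)) m (remove_entry m T) = T"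
    if "T \<in> tableaux la mu p" for T
    using tableaux_remove_largest[OF la mu sub \<open>0 < m\<close> above that] by simp
  have bwd: "fill_cells (skew_cells la nu) m T' \<in> tableaux la mu p
      \<and> (shape_below la mu m (fill_cells (skew_cells la nu) m T'),
         remove_entry m (fill_cells (skew_cells la nu) m T')) = (nu, T')"
    if "(nu, T') \<in> Sigma ?H (\<lambda>nu. tableaux nu mu ?p')" for nu T'
  proof -
    have "horizontal_strip la nu (p m)" "part_subseteq mu nu" "T' \<in> tableaux nu mu ?p'"
      using that by simp_all
    from tableaux_fill_strip[where p = p, OF \<open>0 < m\<close> above this] show ?thesis by simp
  qed
  have "bij_betw (\<lambda>T. (shape_below la mu m T, remove_entry m T)) (tableaux la mu p)
      (Sigma ?H (\<lambda>nu. tableaux nu mu ?p'))"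
  proof (rule bij_betw_byWitness[where f' = "\<lambda>(nu, T'). fill_cells (skew_cells la nu) m T'"])
    show "\<forall>T\<in>tableaux la mu p. (\<lambda>(nu, T'). fill_cells (skew_cells la nu) m T')
        (shape_below la mu m T, remove_entry m T) = T" using fwd by simp
    show "(\<lambda>T. (shape_below la mu m T, remove_entry m T)) ` tableaux la mu p
        \<subseteq> Sigma ?H (\<lambda>nu. tableaux nu mu ?p')" using fwd by blast
    show "\<forall>x\<in>Sigma ?H (\<lambda>nu. tableaux nu mu ?p'). (\<lambda>T. (shape_below la mu m T, remove_entry m T))
        ((\<lambda>(nu, T'). fill_cells (skew_cells la nu) m T') x) = x" using bwd by fastforce
    show "(\<lambda>(nu, T'). fill_cells (skew_cells la nu) m T') ` Sigma ?H (\<lambda>nu. tableaux nu mu ?p')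
        \<subseteq> tableaux la mu p" using bwd by fastforce
  qed
  then have "card (tableaux la mu p) = card (Sigma ?H (\<lambda>nu. tableaux nu mu ?p'))"
    by (rule bij_betw_same_card)
  also have "\<dots> = (\<Sum>nu\<in>?H. card (tableaux nu mu ?p'))"
    by (rule card_SigmaI[OF fin_H]) (use fin_T in blast)
  finally show ?thesis .
qed

lemma branching_rule:
  assumes la: "is_partition la" and mu: "is_partition mu" and "0 < m"
    and above: "\<And>i. m < i \<Longrightarrow> p i = 0"
  shows "schur_coeff la mu p = (\<Sum>nu | horizontal_strip la nu (p m). schur_coeff nu mu (p(m := 0)))"
proof (cases "part_subseteq mu la")
  case False
  have "\<not> part_subseteq mu nu" if "horizontal_strip la nu (p m)" for nu
    using that False unfolding horizontal_strip_def part_subseteq_def by (meson le_trans)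
  then show ?thesis using False unfolding schur_coeff_def by simp
next
  case sub: True
  have "(\<Sum>nu | horizontal_strip la nu (p m). schur_coeff nu mu (p(m := 0)))
      = (\<Sum>nu \<in> {nu \<in> {nu. horizontal_strip la nu (p m)}. part_subseteq mu nu}. int (card (tableaux nu mu (p(m := 0)))))"
    unfolding schur_coeff_def by (rule sum.inter_filter[OF finite_horizontal_strips_inner[OF la], symmetric])
  also have "\<dots> = int (card (tableaux la mu p))"
    using card_tableaux_branching[OF la mu sub \<open>0 < m\<close> above] by (simp add: of_nat_sum)
  finally show ?thesis using sub unfolding schur_coeff_def by simp
qed

section \<open>Products of coefficient functions\<close>

(* Inside the proof monomials are plain exponent functions nat \<Rightarrow> nat, which admit point updates
   q(m := t); sf_mult_lookup transfers products back to the poly_mapping encoding of sf_mult. *)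
definition splits :: "(nat \<Rightarrow> nat) \<Rightarrow> ((nat \<Rightarrow> nat) \<times> (nat \<Rightarrow> nat)) set" where
  "splits p = {(q1, q2). \<forall>i. q1 i + q2 i = p i}"

definition coeff_mult :: "((nat \<Rightarrow> nat) \<Rightarrow> int) \<Rightarrow> ((nat \<Rightarrow> nat) \<Rightarrow> int) \<Rightarrow> (nat \<Rightarrow> nat) \<Rightarrow> int" where
  "coeff_mult f g p = (\<Sum>(q1, q2) \<in> splits p. f q1 * g q2)"

definition h_coeff :: "nat \<Rightarrow> (nat \<Rightarrow> nat) \<Rightarrow> int" where
  "h_coeff n p = (if p 0 = 0 \<and> weight p = n then 1 else 0)"

lemma finite_splits:
  assumes "finite {i. p i \<noteq> 0}"
  shows "finite (splits p)"
proof (rule finite_subset)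
  show "splits p \<subseteq> {q. \<forall>i. q i \<le> p i} \<times> {q. \<forall>i. q i \<le> p i}"
  proof (clarify, intro conjI CollectI allI)
    fix q1 q2 i assume "(q1, q2) \<in> splits p"
    then have "q1 i + q2 i = p i" unfolding splits_def by simp
    then show "q1 i \<le> p i" and "q2 i \<le> p i" by linarith+
  qed
  show "finite ({q. \<forall>i. q i \<le> p i} \<times> {q. \<forall>i. q i \<le> p i})"
    using finite_pointwise_le[OF assms] by simp
qed

lemma splits_zero: "splits (\<lambda>_. 0) = {(\<lambda>_. 0, \<lambda>_. 0)}"
  unfolding splits_def by (auto simp: fun_eq_iff)

lemma coeff_mult_zero: "coeff_mult f g (\<lambda>_. 0) = f (\<lambda>_. 0) * g (\<lambda>_. 0)"
  unfolding coeff_mult_def splits_zero by simp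

lemma coeff_mult_unit:
  assumes "finite {i. p i \<noteq> 0}"
  shows "coeff_mult (\<lambda>q. if q = (\<lambda>_. 0) then 1 else 0) g p = g p"
proof -
  have "coeff_mult (\<lambda>q. if q = (\<lambda>_. 0) then 1 else 0) g p
      = (\<Sum>x\<in>splits p. if x = (\<lambda>_. 0, p) then g p else 0)"
    unfolding coeff_mult_def
  proof (rule sum.cong[OF refl], clarify)
    fix q1 q2 assume "(q1, q2) \<in> splits p"
    then have "q1 = (\<lambda>_. 0) \<longleftrightarrow> (q1, q2) = (\<lambda>_. 0, p)" unfolding splits_def by (auto simp: fun_eq_iff)
    then show "(if q1 = (\<lambda>_. 0) then 1 else 0) * g q2 = (if (q1, q2) = (\<lambda>_. 0, p) then g p else 0)"
      by auto
  qed
  also have "\<dots> = g p"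
    using finite_splits[OF assms] by (simp add: splits_def)
  finally show ?thesis .
qed

lemma coeff_mult_split_variable:
  assumes "finite {i. p i \<noteq> 0}"
  shows "coeff_mult f g p
    = (\<Sum>t = 0..p m. \<Sum>(q1, q2) \<in> splits (p(m := 0)). f (q1(m := p m - t)) * g (q2(m := t)))"
proof -
  let ?r = "p m"
  let ?D = "splits (p(m := 0))"
  have "finite ?D" using assms by (intro finite_splits) (auto elim: rev_finite_subset)
  then have "(\<Sum>t = 0..?r. \<Sum>(q1, q2)\<in>?D. f (q1(m := ?r - t)) * g (q2(m := t)))
      = (\<Sum>(t, q1, q2) \<in> Sigma {0..?r} (\<lambda>_. ?D). f (q1(m := ?r - t)) * g (q2(m := t)))"
    by (subst sum.Sigma) auto
  also have "\<dots> = coeff_mult f g p"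
    unfolding coeff_mult_def
  proof (rule sum.reindex_bij_witness[where i = "\<lambda>(q1, q2). (q2 m, q1(m := 0), q2(m := 0))"
        and j = "\<lambda>(t, q1, q2). (q1(m := ?r - t), q2(m := t))"])
    fix a assume "a \<in> Sigma {0..?r} (\<lambda>_. ?D)"
    then show "(\<lambda>(q1, q2). (q2 m, q1(m := 0), q2(m := 0))) ((\<lambda>(t, q1, q2). (q1(m := ?r - t), q2(m := t))) a) = a"
      and "(\<lambda>(t, q1, q2). (q1(m := ?r - t), q2(m := t))) a \<in> splits p"
      and "(case (\<lambda>(t, q1, q2). (q1(m := ?r - t), q2(m := t))) a of (q1, q2) \<Rightarrow> f q1 * g q2)
        = (case a of (t, q1, q2) \<Rightarrow> f (q1(m := ?r - t)) * g (q2(m := t)))"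
      unfolding splits_def by (auto simp: fun_eq_iff) (metis add_eq_0_iff_both_eq_0)+
  next
    fix b assume "b \<in> splits p"
    then show "(\<lambda>(t, q1, q2). (q1(m := ?r - t), q2(m := t))) ((\<lambda>(q1, q2). (q2 m, q1(m := 0), q2(m := 0))) b) = b"
      and "(\<lambda>(q1, q2). (q2 m, q1(m := 0), q2(m := 0))) b \<in> Sigma {0..?r} (\<lambda>_. ?D)"
      unfolding splits_def by (auto simp: fun_eq_iff) (metis add_diff_cancel_right' le_add2)+
  qed
  finally show ?thesis by simp
qed

lemma h_coeff_zero: "h_coeff n (\<lambda>_. 0) = (if n = 0 then 1 else 0)"
  unfolding h_coeff_def weight_def by simp

lemma h_coeff_update:
  assumes "0 < m" and "q m = 0" and "finite {i. q i \<noteq> 0}"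
  shows "h_coeff n (q(m := t)) = (if t \<le> n then h_coeff (n - t) q else 0)"
proof -
  have "weight (q(m := t)) = weight q + t" using weight_update[OF assms(3), of m t] assms(2) by simp
  moreover have "(q(m := t)) 0 = q 0" using assms(1) by simp
  ultimately show ?thesis unfolding h_coeff_def by auto
qed

lemma coeff_mult_eq_0_if_x0:
  assumes "p 0 \<noteq> 0" and "\<And>q. q 0 \<noteq> 0 \<Longrightarrow> f q = 0" and "\<And>q. q 0 \<noteq> 0 \<Longrightarrow> g q = 0"
  shows "coeff_mult f g p = 0"
  unfolding coeff_mult_def splits_def
proof (rule sum.neutral, clarify)
  fix q1 q2 assume "\<forall>i. q1 i + q2 i = p i"
  then have "q1 0 \<noteq> 0 \<or> q2 0 \<noteq> 0" using assms(1) by (metis add_cancel_left_left)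
  then show "f q1 * g q2 = 0" using assms(2,3) by auto
qed

lemma hsym_eq_h_coeff: "hsym n a = h_coeff n (Poly_Mapping.lookup a)"
  unfolding hsym_def h_coeff_def weight_def by (simp add: keys.rep_eq)

lemma sf_mult_lookup:
  "sf_mult (\<lambda>a. F (Poly_Mapping.lookup a)) (\<lambda>a. G (Poly_Mapping.lookup a)) a
    = coeff_mult F G (Poly_Mapping.lookup a)"
  unfolding sf_mult_def coeff_mult_def
proof (rule sum.reindex_bij_witness[where j = "\<lambda>(b, c). (Poly_Mapping.lookup b, Poly_Mapping.lookup c)"
      and i = "\<lambda>(q1, q2). (Abs_poly_mapping q1, Abs_poly_mapping q2)"])
  fix x assume "x \<in> {(b, c). b + c = a}"
  then show "(\<lambda>(q1, q2). (Abs_poly_mapping q1, Abs_poly_mapping q2)) ((\<lambda>(b, c). (Poly_Mapping.lookup b, Poly_Mapping.lookup c)) x) = x"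
    and "(\<lambda>(b, c). (Poly_Mapping.lookup b, Poly_Mapping.lookup c)) x \<in> splits (Poly_Mapping.lookup a)"
    and "(case (\<lambda>(b, c). (Poly_Mapping.lookup b, Poly_Mapping.lookup c)) x of (q1, q2) \<Rightarrow> F q1 * G q2)
      = (case x of (b, c) \<Rightarrow> F (Poly_Mapping.lookup b) * G (Poly_Mapping.lookup c))"
    unfolding splits_def by (auto simp: lookup_add)
next
  fix y assume y: "y \<in> splits (Poly_Mapping.lookup a)"
  obtain q1 q2 where y_eq: "y = (q1, q2)" by (cases y)
  have q: "\<And>i. q1 i + q2 i = Poly_Mapping.lookup a i" using y y_eq unfolding splits_def by simp
  have "{i. q1 i \<noteq> 0} \<subseteq> {i. Poly_Mapping.lookup a i \<noteq> 0}"
    and "{i. q2 i \<noteq> 0} \<subseteq> {i. Poly_Mapping.lookup a i \<noteq> 0}"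
    by (simp_all add: Collect_mono flip: q)
  then have "finite {i. q1 i \<noteq> 0}" and "finite {i. q2 i \<noteq> 0}"
    using finite_lookup[of a] by (blast intro: finite_subset)+
  then have l1: "Poly_Mapping.lookup (Abs_poly_mapping q1) = q1"
    and l2: "Poly_Mapping.lookup (Abs_poly_mapping q2) = q2"
    by (simp_all add: lookup_Abs_poly_mapping)
  have "Abs_poly_mapping q1 + Abs_poly_mapping q2 = a"
    by (rule poly_mapping_eqI) (simp add: lookup_add l1 l2 q)
  then show "(\<lambda>(b, c). (Poly_Mapping.lookup b, Poly_Mapping.lookup c)) ((\<lambda>(q1, q2). (Abs_poly_mapping q1, Abs_poly_mapping q2)) y) = y"
    and "(\<lambda>(q1, q2). (Abs_poly_mapping q1, Abs_poly_mapping q2)) y \<in> {(b, c). b + c = a}"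
    using y_eq l1 l2 by simp_all
qed

section \<open>The constant term\<close>

lemma interlaces_update_first_difference:
  assumes mu: "is_partition mu" and il: "interlaces rho la"
    and below: "\<And>i. i < i0 \<Longrightarrow> la i = mu i" and "la i0 < mu i0"
    and "mu i0 - 1 \<le> v" and "v \<le> mu i0"
  shows "interlaces (rho(i0 := v)) la"
  unfolding interlaces_def
proof (intro allI conjI)
  fix i
  show "la i \<le> (rho(i0 := v)) i"
    using il \<open>la i0 < mu i0\<close> \<open>mu i0 - 1 \<le> v\<close> unfolding interlaces_def by auto
  show "(rho(i0 := v)) (Suc i) \<le> la i"
  proof (cases "Suc i = i0")
    case True
    then have "v \<le> mu i" using \<open>v \<le> mu i0\<close> is_partition_antimono[OF mu, of i i0] by simp
    then show ?thesis using True below[of i] by simp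
  next
    case False
    then show ?thesis using il unfolding interlaces_def by simp
  qed
qed

definition shapes_between :: "(nat \<Rightarrow> nat) \<Rightarrow> (nat \<Rightarrow> nat) \<Rightarrow> (nat \<Rightarrow> nat) set" where
  "shapes_between la mu = {rho. interlaces rho la \<and> (\<forall>i. rho i \<le> mu i \<and> mu i \<le> Suc (rho i))}"

lemma finite_shapes_between: "is_partition mu \<Longrightarrow> finite (shapes_between la mu)"
  by (rule finite_subset[OF _ finite_pointwise_le[OF is_partition_finite_support]])
    (auto simp: shapes_between_def)

lemma card_skew_cells_shapes_between:
  assumes "is_partition mu" and "rho \<in> shapes_between la mu"
  shows "card (skew_cells rho la) + card (skew_cells mu rho) = card (skew_cells mu la)"
proof -
  have "\<And>i. la i \<le> rho i" and "\<And>i. rho i \<le> mu i"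
    using assms(2) unfolding shapes_between_def interlaces_def by blast+
  from card_skew_cells_add[of la rho mu, OF this is_partition_finite_support[OF assms(1)]]
  show ?thesis by simp
qed

lemma shapes_between_self: "is_partition la \<Longrightarrow> shapes_between la la = {la}"
  unfolding shapes_between_def interlaces_def
  by (auto intro: antisym simp: fun_eq_iff is_partition_antimono)

(* Toggling row i0, the first row where la and mu differ, between mu i0 - 1 and mu i0 is a
   sign-reversing involution. *)
lemma signed_count_shapes_between:
  assumes la: "is_partition la" and mu: "is_partition mu" and "la \<noteq> mu"
  shows "(\<Sum>rho \<in> shapes_between la mu. (-1::int) ^ card (skew_cells mu rho)) = 0"
proof (cases "shapes_between la mu = {}")
  case False
  then obtain rho0 where "rho0 \<in> shapes_between la mu" by blast
  then have la_mu: "la i \<le> mu i" for i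
    unfolding shapes_between_def interlaces_def by (blast intro: order_trans)
  then have "\<exists>i. la i < mu i" using \<open>la \<noteq> mu\<close> by (metis ext le_neq_implies_less)
  define i0 where "i0 = (LEAST i. la i < mu i)"
  have i0: "la i0 < mu i0" unfolding i0_def by (rule LeastI_ex) fact
  have below: "la i = mu i" if "i < i0" for i
    using not_less_Least[OF that[unfolded i0_def]] la_mu[of i] by simp
  define toggle where "toggle rho = rho(i0 := if rho i0 = mu i0 then mu i0 - 1 else mu i0)" for rho
  show ?thesis
  proof (rule sum_involution_eq_0[where h = toggle])
    fix rho assume rho: "rho \<in> shapes_between la mu"
    then have bounds: "rho i \<le> mu i \<and> mu i \<le> Suc (rho i)" for i
      unfolding shapes_between_def by blast
    then have rho_i0: "rho i0 = mu i0 \<or> rho i0 = mu i0 - 1" by (metis le_SucE diff_Suc_1 le_antisym)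
    show "toggle rho \<in> shapes_between la mu"
      using rho bounds i0 unfolding shapes_between_def toggle_def
      by (auto intro!: interlaces_update_first_difference[OF mu _ below i0])
    show "toggle (toggle rho) = rho" using rho_i0 i0 unfolding toggle_def by auto
    show "toggle rho \<noteq> rho" using i0 unfolding toggle_def by (auto simp: fun_eq_iff)
    have "card (skew_cells mu (toggle rho)) = Suc (card (skew_cells mu rho))
      \<or> card (skew_cells mu rho) = Suc (card (skew_cells mu (toggle rho)))"
      using rho_i0 card_skew_cells_remove_last[OF is_partition_finite_support[OF mu], of i0 rho] i0
      unfolding toggle_def by (auto simp: fun_upd_idem)
    then show "(-1::int) ^ card (skew_cells mu (toggle rho)) + (-1) ^ card (skew_cells mu rho) = 0"
      by auto
  qed
qed simp

lemma strip_pairs_eq_shapes_between: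
  assumes la: "is_partition la" and mu: "is_partition mu" and "k \<le> n"
  shows "{rho. horizontal_strip rho la (n - k) \<and> vertical_strip mu rho k}
    = (if card (skew_cells mu la) = n then {rho \<in> shapes_between la mu. card (skew_cells mu rho) = k} else {})"
proof (rule set_eqI)
  fix rho
  have "interlaces rho la \<Longrightarrow> is_partition rho" by (rule interlaces_is_partition_outer[OF la])
  then have mem: "horizontal_strip rho la (n - k) \<and> vertical_strip mu rho k
      \<longleftrightarrow> rho \<in> shapes_between la mu \<and> card (skew_cells rho la) = n - k \<and> card (skew_cells mu rho) = k"
    unfolding shapes_between_def horizontal_strip_iff vertical_strip_iff using la mu by auto
  show "rho \<in> {rho. horizontal_strip rho la (n - k) \<and> vertical_strip mu rho k}
    \<longleftrightarrow> rho \<in> (if card (skew_cells mu la) = n then {rho \<in> shapes_between la mu. card (skew_cells mu rho) = k} else {})"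
  proof (cases "rho \<in> shapes_between la mu")
    case True
    have "card (skew_cells rho la) = n - k \<and> card (skew_cells mu rho) = k
        \<longleftrightarrow> card (skew_cells mu la) = n \<and> card (skew_cells mu rho) = k"
      using card_skew_cells_shapes_between[OF mu True] \<open>k \<le> n\<close> by presburger
    then show ?thesis using mem True by auto
  qed (use mem in auto)
qed

lemma alternating_strip_count:
  assumes la: "is_partition la" and mu: "is_partition mu"
  shows "(\<Sum>k = 0..n. (-1::int) ^ k * int (card {rho. horizontal_strip rho la (n - k) \<and> vertical_strip mu rho k}))
    = (if n = 0 \<and> la = mu then 1 else 0)"
proof (cases "card (skew_cells mu la) = n")
  case True
  let ?W = "shapes_between la mu" and ?c = "\<lambda>rho. card (skew_cells mu rho)"
  have "(\<Sum>k = 0..n. (-1::int) ^ k * int (card {rho. horizontal_strip rho la (n - k) \<and> vertical_strip mu rho k}))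
      = (\<Sum>k = 0..n. \<Sum>rho \<in> {rho \<in> ?W. ?c rho = k}. (-1::int) ^ ?c rho)"
    using strip_pairs_eq_shapes_between[OF la mu] True by (intro sum.cong) auto
  also have "\<dots> = (\<Sum>rho \<in> ?W. (-1::int) ^ ?c rho)"
  proof (rule sum.group[OF finite_shapes_between[OF mu]])
    show "?c ` ?W \<subseteq> {0..n}" using card_skew_cells_shapes_between[OF mu] True by fastforce
  qed simp
  also have "\<dots> = (if la = mu then 1 else 0)"
    using signed_count_shapes_between[OF la mu] shapes_between_self[OF la] by auto
  finally show ?thesis using True by auto
next
  case False
  then have "int (card {rho. horizontal_strip rho la (n - k) \<and> vertical_strip mu rho k}) = 0"
    if "k \<in> {0..n}" for k
    using strip_pairs_eq_shapes_between[OF la mu] that by simp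
  moreover have "\<not> (n = 0 \<and> la = mu)" using False by auto
  ultimately show ?thesis by simp
qed

section \<open>Commuting horizontal strips\<close>

lemma weight_reflection:
  assumes la: "\<And>i. N \<le> i \<Longrightarrow> la i = 0" and rho: "\<And>i. N \<le> i \<Longrightarrow> rho i = 0"
    and rel: "\<And>i. nu i + lp (Suc i) = max (la (Suc i)) (rho (Suc i)) + min (la i) (rho i)"
    and lp0: "lp 0 = max (la 0) (rho 0) + t"
  shows "weight nu + weight lp = weight la + weight rho + t"
proof -
  let ?M = "\<lambda>i. max (la i) (rho i)" and ?m = "\<lambda>i. min (la i) (rho i)"
  have vanish: "nu i = 0 \<and> lp (Suc i) = 0" if "N \<le> i" for i
    using rel[of i] la[of i] rho[of i] la[of "Suc i"] rho[of "Suc i"] that by simp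
  have "weight nu = (\<Sum>i<N. nu i)" using vanish by (intro weight_eq_sum_lessThan) blast
  moreover have "weight lp = (\<Sum>i<Suc N. lp i)"
  proof (rule weight_eq_sum_lessThan)
    fix i assume "Suc N \<le> i"
    then show "lp i = 0" using vanish[of "i - 1"] by (cases i) auto
  qed
  moreover have "weight la = (\<Sum>i<N. la i)" and "weight rho = (\<Sum>i<N. rho i)"
    using la rho by (simp_all add: weight_eq_sum_lessThan)
  moreover have "(\<Sum>i<Suc N. lp i) = lp 0 + (\<Sum>i<N. lp (Suc i))"
    by (rule sum.lessThan_Suc_shift)
  moreover have "(\<Sum>i<N. nu i) + (\<Sum>i<N. lp (Suc i)) = (\<Sum>i<N. ?M (Suc i)) + (\<Sum>i<N. ?m i)"
    by (simp add: rel sum.distrib[symmetric])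
  moreover have "?M 0 + (\<Sum>i<N. ?M (Suc i)) = (\<Sum>i<N. ?M i)"
    using sum.lessThan_Suc_shift[of ?M N] la[of N] rho[of N] by simp
  moreover have "(\<Sum>i<N. ?M i) + (\<Sum>i<N. ?m i) = (\<Sum>i<N. la i) + (\<Sum>i<N. rho i)"
  proof -
    have "?M i + ?m i = la i + rho i" for i by (simp add: max_def min_def)
    then show ?thesis by (simp add: sum.distrib[symmetric])
  qed
  ultimately show ?thesis using lp0 by linarith
qed

(* Fomin's local rule: nu i and lp (Suc i) are mirror images of each other in the interval
   [max (la (Suc i)) (rho (Suc i)), min (la i) (rho i)]. *)
definition lower_reflection :: "(nat \<Rightarrow> nat) \<Rightarrow> (nat \<Rightarrow> nat) \<Rightarrow> (nat \<Rightarrow> nat) \<Rightarrow> nat \<Rightarrow> nat" where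
  "lower_reflection la rho lp i = max (la (Suc i)) (rho (Suc i)) + min (la i) (rho i) - lp (Suc i)"

definition upper_reflection :: "(nat \<Rightarrow> nat) \<Rightarrow> (nat \<Rightarrow> nat) \<Rightarrow> nat \<Rightarrow> (nat \<Rightarrow> nat) \<Rightarrow> nat \<Rightarrow> nat" where
  "upper_reflection la rho t nu i = (case i of
      0 \<Rightarrow> max (la 0) (rho 0) + t
    | Suc j \<Rightarrow> max (la (Suc j)) (rho (Suc j)) + min (la j) (rho j) - nu j)"

lemma remove_then_add_strips:
  assumes la: "is_partition la" and h1: "horizontal_strip lp la s" and h2: "horizontal_strip lp rho r"
  defines "t \<equiv> lp 0 - max (la 0) (rho 0)" and "nu \<equiv> lower_reflection la rho lp"
  shows "t \<le> r \<and> t \<le> s \<and> horizontal_strip la nu (r - t) \<and> horizontal_strip rho nu (s - t)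
    \<and> upper_reflection la rho t nu = lp"
proof -
  have il_la: "interlaces lp la" and s: "card (skew_cells lp la) = s"
    and rho: "is_partition rho" and il_rho: "interlaces lp rho" and r: "card (skew_cells lp rho) = r"
    using h1 h2 unfolding horizontal_strip_iff by blast+
  have la_lp: "la i \<le> lp i \<and> lp (Suc i) \<le> la i" and rho_lp: "rho i \<le> lp i \<and> lp (Suc i) \<le> rho i" for i
    using il_la il_rho unfolding interlaces_def by blast+
  have rel: "nu i + lp (Suc i) = max (la (Suc i)) (rho (Suc i)) + min (la i) (rho i)" for i
  proof -
    have "lp (Suc i) \<le> min (la i) (rho i)" using la_lp[of i] rho_lp[of i] by simp
    then show ?thesis unfolding nu_def lower_reflection_def by linarith
  qed
  have nu_bounds: "max (la (Suc i)) (rho (Suc i)) \<le> nu i \<and> nu i \<le> min (la i) (rho i)" for i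
  proof -
    have "max (la (Suc i)) (rho (Suc i)) \<le> lp (Suc i)" and "lp (Suc i) \<le> min (la i) (rho i)"
      using la_lp rho_lp by simp_all
    then show ?thesis using rel[of i] by linarith
  qed
  have lp0: "lp 0 = max (la 0) (rho 0) + t" using la_lp[of 0] rho_lp[of 0] unfolding t_def by simp
  have il_la_nu: "interlaces la nu" and il_rho_nu: "interlaces rho nu"
    using nu_bounds unfolding interlaces_def by simp_all
  have nu: "is_partition nu" using interlaces_is_partition_inner[OF la il_la_nu] .
  obtain N where "\<And>i. N \<le> i \<Longrightarrow> la i = 0" and "\<And>i. N \<le> i \<Longrightarrow> rho i = 0"
    using partitions_vanish_beyond[OF la rho] by blast
  then have w: "weight nu + weight lp = weight la + weight rho + t"
    using rel lp0 by (rule weight_reflection)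
  have "card (skew_cells lp la) + weight la = weight lp" and "card (skew_cells lp rho) + weight rho = weight lp"
    and "card (skew_cells la nu) + weight nu = weight la" and "card (skew_cells rho nu) + weight nu = weight rho"
    using la_lp rho_lp nu_bounds is_partition_finite_support la rho
      interlaces_is_partition_outer[OF la il_la] by (auto intro!: card_skew_cells)
  then have "t \<le> r" "t \<le> s" "card (skew_cells la nu) = r - t" "card (skew_cells rho nu) = s - t"
    using w s r by linarith+
  moreover have "upper_reflection la rho t nu = lp"
  proof
    fix i show "upper_reflection la rho t nu i = lp i"
    proof (cases i)
      case (Suc j)
      then show ?thesis using rel[of j] unfolding upper_reflection_def by simp
    qed (simp add: upper_reflection_def lp0)
  qed
  ultimately show ?thesis
    unfolding horizontal_strip_iff using nu il_la_nu il_rho_nu by simp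
qed

lemma add_then_remove_strips:
  assumes la: "is_partition la" and "t \<le> r" and "t \<le> s"
    and h1: "horizontal_strip la nu (r - t)" and h2: "horizontal_strip rho nu (s - t)"
  defines "lp \<equiv> upper_reflection la rho t nu"
  shows "horizontal_strip lp la s \<and> horizontal_strip lp rho r \<and> lp 0 - max (la 0) (rho 0) = t
    \<and> lower_reflection la rho lp = nu"
proof -
  have nu: "is_partition nu" and il_la: "interlaces la nu" and r: "card (skew_cells la nu) = r - t"
    and il_rho: "interlaces rho nu" and s: "card (skew_cells rho nu) = s - t"
    using h1 h2 unfolding horizontal_strip_iff by blast+
  have rho: "is_partition rho" using interlaces_is_partition_outer[OF nu il_rho] .
  have nu_la: "nu i \<le> la i \<and> la (Suc i) \<le> nu i" and nu_rho: "nu i \<le> rho i \<and> rho (Suc i) \<le> nu i" for i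
    using il_la il_rho unfolding interlaces_def by blast+
  have lp0: "lp 0 = max (la 0) (rho 0) + t" unfolding lp_def upper_reflection_def by simp
  have rel: "nu i + lp (Suc i) = max (la (Suc i)) (rho (Suc i)) + min (la i) (rho i)" for i
  proof -
    have "nu i \<le> min (la i) (rho i)" using nu_la nu_rho by simp
    then show ?thesis unfolding lp_def upper_reflection_def by simp linarith
  qed
  have lp_bounds: "max (la (Suc i)) (rho (Suc i)) \<le> lp (Suc i) \<and> lp (Suc i) \<le> min (la i) (rho i)" for i
  proof -
    have "max (la (Suc i)) (rho (Suc i)) \<le> nu i" and "nu i \<le> min (la i) (rho i)"
      using nu_la nu_rho by simp_all
    then show ?thesis using rel[of i] by linarith
  qed
  have "la i \<le> lp i \<and> rho i \<le> lp i" for i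
    using lp0 lp_bounds by (cases i) auto
  then have il_lp_la: "interlaces lp la" and il_lp_rho: "interlaces lp rho"
    using lp_bounds unfolding interlaces_def by simp_all
  have lp: "is_partition lp" using interlaces_is_partition_outer[OF la il_lp_la] .
  obtain N where "\<And>i. N \<le> i \<Longrightarrow> la i = 0" and "\<And>i. N \<le> i \<Longrightarrow> rho i = 0"
    using partitions_vanish_beyond[OF la rho] by blast
  then have w: "weight nu + weight lp = weight la + weight rho + t"
    using rel lp0 by (rule weight_reflection)
  have "card (skew_cells lp la) + weight la = weight lp" and "card (skew_cells lp rho) + weight rho = weight lp"
    and "card (skew_cells la nu) + weight nu = weight la" and "card (skew_cells rho nu) + weight nu = weight rho"
    using il_lp_la il_lp_rho nu_la nu_rho is_partition_finite_support la rho lp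
    unfolding interlaces_def by (auto intro!: card_skew_cells)
  then have "card (skew_cells lp la) = s" and "card (skew_cells lp rho) = r"
    using w r s \<open>t \<le> r\<close> \<open>t \<le> s\<close> by linarith+
  moreover have "lower_reflection la rho lp = nu"
  proof
    fix i show "lower_reflection la rho lp i = nu i"
      using rel[of i] unfolding lower_reflection_def by simp
  qed
  ultimately show ?thesis unfolding horizontal_strip_iff using la rho il_lp_la il_lp_rho lp0 by simp
qed

lemma strip_commutation:
  fixes F :: "(nat \<Rightarrow> nat) \<Rightarrow> int"
  assumes la: "is_partition la"
  shows "(\<Sum>lp | horizontal_strip lp la s. \<Sum>rho | horizontal_strip lp rho r. F rho)
    = (\<Sum>t = 0..min r s. \<Sum>nu | horizontal_strip la nu (r - t). \<Sum>rho | horizontal_strip rho nu (s - t). F rho)"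
proof -
  let ?P = "SIGMA lp:{lp. horizontal_strip lp la s}. {rho. horizontal_strip lp rho r}"
  let ?Q = "SIGMA t:{0..min r s}. SIGMA nu:{nu. horizontal_strip la nu (r - t)}. {rho. horizontal_strip rho nu (s - t)}"
  have part_outer: "is_partition lp" if "horizontal_strip lp la s" for lp
    using that interlaces_is_partition_outer[OF la] unfolding horizontal_strip_iff by blast
  have part_inner: "is_partition nu" if "horizontal_strip la nu r'" for nu r'
    using that unfolding horizontal_strip_iff by blast
  have "(\<Sum>lp | horizontal_strip lp la s. \<Sum>rho | horizontal_strip lp rho r. F rho) = (\<Sum>(lp, rho)\<in>?P. F rho)"
    by (rule sum.Sigma) (auto intro: finite_horizontal_strips_outer[OF la] finite_horizontal_strips_inner part_outer)
  also have "\<dots> = (\<Sum>(t, nu, rho)\<in>?Q. F rho)"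
  proof (rule sum.reindex_bij_witness[where j = "\<lambda>(lp, rho). (lp 0 - max (la 0) (rho 0), lower_reflection la rho lp, rho)"
        and i = "\<lambda>(t, nu, rho). (upper_reflection la rho t nu, rho)"])
    fix a assume "a \<in> ?P"
    then obtain lp rho where a: "a = (lp, rho)" "horizontal_strip lp la s" "horizontal_strip lp rho r" by blast
    from remove_then_add_strips[OF la a(2,3)]
    show "(\<lambda>(t, nu, rho). (upper_reflection la rho t nu, rho))
        ((\<lambda>(lp, rho). (lp 0 - max (la 0) (rho 0), lower_reflection la rho lp, rho)) a) = a"
      and "(\<lambda>(lp, rho). (lp 0 - max (la 0) (rho 0), lower_reflection la rho lp, rho)) a \<in> ?Q"
      using a(1) by simp_all
  next
    fix b assume "b \<in> ?Q"
    then obtain t nu rho where b: "b = (t, nu, rho)" "t \<le> r" "t \<le> s"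
      "horizontal_strip la nu (r - t)" "horizontal_strip rho nu (s - t)" by auto
    from add_then_remove_strips[OF la b(2-5)]
    show "(\<lambda>(lp, rho). (lp 0 - max (la 0) (rho 0), lower_reflection la rho lp, rho))
        ((\<lambda>(t, nu, rho). (upper_reflection la rho t nu, rho)) b) = b"
      and "(\<lambda>(t, nu, rho). (upper_reflection la rho t nu, rho)) b \<in> ?P"
      using b(1) by simp_all
  qed (simp add: case_prod_beta)
  also have "\<dots> = (\<Sum>t = 0..min r s. \<Sum>(nu, rho) \<in> (SIGMA nu:{nu. horizontal_strip la nu (r - t)}.
      {rho. horizontal_strip rho nu (s - t)}). F rho)"
    by (rule sum.Sigma[symmetric]) (auto intro!: finite_SigmaI finite_horizontal_strips_inner[OF la]
        finite_horizontal_strips_outer part_inner)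
  also have "\<dots> = (\<Sum>t = 0..min r s. \<Sum>nu | horizontal_strip la nu (r - t). \<Sum>rho | horizontal_strip rho nu (s - t). F rho)"
    by (intro sum.cong refl sum.Sigma[symmetric])
      (auto intro: finite_horizontal_strips_inner[OF la] finite_horizontal_strips_outer part_inner)
  finally show ?thesis .
qed

section \<open>The Pieri-type identity\<close>

lemma sum_triangle_swap:
  fixes h :: "nat \<Rightarrow> nat \<Rightarrow> 'a::comm_monoid_add"
  shows "(\<Sum>k = 0..n. \<Sum>t = 0..min r (n - k). h k t) = (\<Sum>t = 0..min r n. \<Sum>k = 0..n - t. h k t)"
proof -
  have "(\<Sum>k = 0..n. \<Sum>t = 0..min r (n - k). h k t) = (\<Sum>k = 0..n. \<Sum>t | t \<in> {0..min r n} \<and> k + t \<le> n. h k t)"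
    by (intro sum.cong refl arg_cong[where f = "sum _"]) auto
  also have "\<dots> = (\<Sum>t = 0..min r n. \<Sum>k | k \<in> {0..n} \<and> k + t \<le> n. h k t)"
    by (rule sum.swap_restrict) simp_all
  also have "\<dots> = (\<Sum>t = 0..min r n. \<Sum>k = 0..n - t. h k t)"
    by (intro sum.cong refl arg_cong[where f = "sum _"]) auto
  finally show ?thesis .
qed

definition skew_pieri_sum :: "(nat \<Rightarrow> nat) \<Rightarrow> (nat \<Rightarrow> nat) \<Rightarrow> nat \<Rightarrow> (nat \<Rightarrow> nat) \<Rightarrow> int" where
  "skew_pieri_sum la mu n p = (\<Sum>k = 0..n. (-1) ^ k *
     (\<Sum>mm | vertical_strip mu mm k. \<Sum>lp | horizontal_strip lp la (n - k). schur_coeff lp mm p))"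

lemma coeff_mult_schur_h_recursion:
  assumes la: "is_partition la" and mu: "is_partition mu" and "0 < m"
    and above: "\<And>i. m < i \<Longrightarrow> p i = 0"
  shows "coeff_mult (schur_coeff la mu) (h_coeff n) p
    = (\<Sum>t = 0..min (p m) n. \<Sum>nu | horizontal_strip la nu (p m - t).
        coeff_mult (schur_coeff nu mu) (h_coeff (n - t)) (p(m := 0)))"
proof -
  let ?r = "p m" and ?p' = "p(m := 0)"
  let ?N = "\<lambda>t. {nu. horizontal_strip la nu (?r - t)}"
  have summand: "schur_coeff la mu (q1(m := ?r - t)) * h_coeff n (q2(m := t))
      = (if t \<le> n then \<Sum>nu \<in> ?N t. schur_coeff nu mu q1 * h_coeff (n - t) q2 else 0)"
    if "(q1, q2) \<in> splits ?p'" for q1 q2 t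
  proof -
    have q: "q1 i + q2 i = ?p' i" for i using that unfolding splits_def by simp
    have vanish: "q1 i = 0 \<and> q2 i = 0" if "m < i \<or> i = m" for i
      using q[of i] above[of i] that by auto
    have "schur_coeff la mu (q1(m := ?r - t)) = (\<Sum>nu \<in> ?N t. schur_coeff nu mu q1)"
      using branching_rule[OF la mu \<open>0 < m\<close>, of "q1(m := ?r - t)"] vanish by (simp add: fun_upd_idem)
    moreover have "h_coeff n (q2(m := t)) = (if t \<le> n then h_coeff (n - t) q2 else 0)"
      using vanish by (intro h_coeff_update \<open>0 < m\<close> finite_support_if_vanishes_above[of m]) auto
    ultimately show ?thesis by (simp add: sum_distrib_right)
  qed
  have "coeff_mult (schur_coeff la mu) (h_coeff n) p
      = (\<Sum>t = 0..?r. \<Sum>(q1, q2) \<in> splits ?p'. schur_coeff la mu (q1(m := ?r - t)) * h_coeff n (q2(m := t)))"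
    using finite_support_if_vanishes_above[of m p] above by (intro coeff_mult_split_variable) blast
  also have "\<dots> = (\<Sum>t = 0..?r. if t \<le> n then \<Sum>nu \<in> ?N t. coeff_mult (schur_coeff nu mu) (h_coeff (n - t)) ?p' else 0)"
  proof (rule sum.cong[OF refl])
    fix t
    have "(\<Sum>(q1, q2) \<in> splits ?p'. schur_coeff la mu (q1(m := ?r - t)) * h_coeff n (q2(m := t)))
        = (\<Sum>x \<in> splits ?p'. if t \<le> n then \<Sum>nu \<in> ?N t. schur_coeff nu mu (fst x) * h_coeff (n - t) (snd x) else 0)"
      using summand by (intro sum.cong refl) (auto simp: case_prod_beta)
    also have "\<dots> = (if t \<le> n then \<Sum>nu \<in> ?N t. \<Sum>x \<in> splits ?p'. schur_coeff nu mu (fst x) * h_coeff (n - t) (snd x) else 0)"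
      by (simp add: sum.swap[of _ "?N t"])
    finally show "(\<Sum>(q1, q2) \<in> splits ?p'. schur_coeff la mu (q1(m := ?r - t)) * h_coeff n (q2(m := t)))
        = (if t \<le> n then \<Sum>nu \<in> ?N t. coeff_mult (schur_coeff nu mu) (h_coeff (n - t)) ?p' else 0)"
      unfolding coeff_mult_def by (simp add: case_prod_beta)
  qed
  also have "\<dots> = (\<Sum>t = 0..min ?r n. \<Sum>nu \<in> ?N t. coeff_mult (schur_coeff nu mu) (h_coeff (n - t)) ?p')"
    by (subst sum.inter_filter[symmetric]) (auto intro: sum.cong)
  finally show ?thesis .
qed

lemma skew_pieri_sum_recursion:
  assumes la: "is_partition la" and mu: "is_partition mu" and "0 < m"
    and above: "\<And>i. m < i \<Longrightarrow> p i = 0"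
  shows "skew_pieri_sum la mu n p
    = (\<Sum>t = 0..min (p m) n. \<Sum>nu | horizontal_strip la nu (p m - t). skew_pieri_sum nu mu (n - t) (p(m := 0)))"
proof -
  let ?r = "p m" and ?p' = "p(m := 0)"
  let ?V = "\<lambda>k. {mm. vertical_strip mu mm k}"
  let ?Y = "\<lambda>k t. (-1::int) ^ k * (\<Sum>mm \<in> ?V k. \<Sum>nu | horizontal_strip la nu (?r - t).
      \<Sum>rho | horizontal_strip rho nu (n - k - t). schur_coeff rho mm ?p')"
  have branch: "schur_coeff lp mm p = (\<Sum>rho | horizontal_strip lp rho ?r. schur_coeff rho mm ?p')"
    if "horizontal_strip lp la s" and "vertical_strip mu mm k" for lp mm s k
  proof (rule branching_rule[OF _ _ \<open>0 < m\<close> above])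
    show "is_partition lp" using that(1) interlaces_is_partition_outer[OF la] unfolding horizontal_strip_iff by blast
    show "is_partition mm" using that(2) unfolding vertical_strip_def by blast
  qed
  have "skew_pieri_sum la mu n p = (\<Sum>k = 0..n. (-1) ^ k * (\<Sum>mm \<in> ?V k.
      \<Sum>lp | horizontal_strip lp la (n - k). \<Sum>rho | horizontal_strip lp rho ?r. schur_coeff rho mm ?p'))"
    unfolding skew_pieri_sum_def using branch by (intro sum.cong refl arg_cong[where f = "times _"]) auto
  also have "\<dots> = (\<Sum>k = 0..n. \<Sum>t = 0..min ?r (n - k). ?Y k t)"
    by (simp add: strip_commutation[OF la] sum_distrib_left sum.swap[of _ "?V _"])
  also have "\<dots> = (\<Sum>t = 0..min ?r n. \<Sum>k = 0..n - t. ?Y k t)"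
    by (rule sum_triangle_swap)
  also have "\<dots> = (\<Sum>t = 0..min ?r n. \<Sum>nu | horizontal_strip la nu (?r - t). skew_pieri_sum nu mu (n - t) ?p')"
    unfolding skew_pieri_sum_def
    by (simp add: sum_distrib_left sum.swap[of _ "{nu. horizontal_strip la nu _}"] add.commute)
  finally show ?thesis .
qed

lemma skew_pieri_sum_zero_content:
  assumes la: "is_partition la" and mu: "is_partition mu"
  shows "skew_pieri_sum la mu n (\<lambda>_. 0)
    = (\<Sum>k = 0..n. (-1) ^ k * int (card {rho. horizontal_strip rho la (n - k) \<and> vertical_strip mu rho k}))"
proof -
  have "(\<Sum>mm | vertical_strip mu mm k. \<Sum>lp | horizontal_strip lp la (n - k). schur_coeff lp mm (\<lambda>_. 0))
      = int (card {rho. horizontal_strip rho la (n - k) \<and> vertical_strip mu rho k})" for k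
  proof -
    have inner: "(\<Sum>lp | horizontal_strip lp la (n - k). schur_coeff lp mm (\<lambda>_. 0))
        = (if horizontal_strip mm la (n - k) then 1 else 0)" for mm
    proof -
      have "(\<Sum>lp | horizontal_strip lp la (n - k). schur_coeff lp mm (\<lambda>_. 0))
          = (\<Sum>lp | horizontal_strip lp la (n - k). if lp = mm then 1 else 0)"
        using schur_coeff_zero_content interlaces_is_partition_outer[OF la]
        by (intro sum.cong) (auto simp: horizontal_strip_iff)
      also have "\<dots> = (if horizontal_strip mm la (n - k) then 1 else 0)"
        by (subst sum.delta[OF finite_horizontal_strips_outer[OF la]]) simp
      finally show ?thesis .
    qed
    have "(\<Sum>mm | vertical_strip mu mm k. \<Sum>lp | horizontal_strip lp la (n - k). schur_coeff lp mm (\<lambda>_. 0))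
        = (\<Sum>mm | vertical_strip mu mm k. if horizontal_strip mm la (n - k) then 1 else 0)"
      unfolding inner ..
    also have "\<dots> = (\<Sum>mm \<in> {mm \<in> {mm. vertical_strip mu mm k}. horizontal_strip mm la (n - k)}. 1)"
      by (rule sum.inter_filter[OF finite_vertical_strips_inner[OF mu], symmetric])
    also have "{mm \<in> {mm. vertical_strip mu mm k}. horizontal_strip mm la (n - k)}
        = {rho. horizontal_strip rho la (n - k) \<and> vertical_strip mu rho k}" by auto
    finally show ?thesis by simp
  qed
  then show ?thesis unfolding skew_pieri_sum_def by simp
qed

lemma coeff_mult_schur_h_zero_content:
  assumes "is_partition la" and "is_partition mu"
  shows "coeff_mult (schur_coeff la mu) (h_coeff n) (\<lambda>_. 0) = skew_pieri_sum la mu n (\<lambda>_. 0)"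
  using alternating_strip_count[OF assms] skew_pieri_sum_zero_content[OF assms]
  by (simp add: coeff_mult_zero schur_coeff_zero_content[OF assms(1)] h_coeff_zero)

lemma coeff_mult_schur_h_eq_skew_pieri_sum:
  assumes "is_partition la" and "is_partition mu" and "finite {i. p i \<noteq> 0}"
  shows "coeff_mult (schur_coeff la mu) (h_coeff n) p = skew_pieri_sum la mu n p"
proof (cases "p 0 = 0")
  case True
  obtain m where "\<And>i. m \<le> i \<Longrightarrow> p i = 0" using finite_support_vanishes[OF assms(3)] by blast
  then have "\<And>i. m < i \<Longrightarrow> p i = 0" by simp
  with True assms(1,2) show ?thesis
  proof (induction m arbitrary: la n p)
    case 0
    have "p = (\<lambda>_. 0)"
    proof
      fix i show "p i = 0" using "0.prems"(1,4) by (cases i) auto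
    qed
    then show ?case using coeff_mult_schur_h_zero_content[OF "0.prems"(2,3)] by simp
  next
    case (Suc m)
    have above: "\<And>i. m < i \<Longrightarrow> (p(Suc m := 0)) i = 0" using Suc.prems(4) by (simp add: Suc_lessI)
    have IH: "coeff_mult (schur_coeff nu mu) (h_coeff n') (p(Suc m := 0)) = skew_pieri_sum nu mu n' (p(Suc m := 0))"
      if "is_partition nu" for nu n'
    proof (rule Suc.IH[OF _ that Suc.prems(3) above])
      show "(p(Suc m := 0)) 0 = 0" using Suc.prems(1) by simp
    qed
    have "coeff_mult (schur_coeff la mu) (h_coeff n) p
        = (\<Sum>t = 0..min (p (Suc m)) n. \<Sum>nu | horizontal_strip la nu (p (Suc m) - t).
            coeff_mult (schur_coeff nu mu) (h_coeff (n - t)) (p(Suc m := 0)))"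
      by (rule coeff_mult_schur_h_recursion[where m = "Suc m" and p = p, OF Suc.prems(2,3) _ Suc.prems(4)]) simp
    also have "\<dots> = (\<Sum>t = 0..min (p (Suc m)) n. \<Sum>nu | horizontal_strip la nu (p (Suc m) - t).
        skew_pieri_sum nu mu (n - t) (p(Suc m := 0)))"
      using IH by (intro sum.cong refl) (auto simp: horizontal_strip_def)
    also have "\<dots> = skew_pieri_sum la mu n p"
      by (rule skew_pieri_sum_recursion[where m = "Suc m" and p = p, OF Suc.prems(2,3) _ Suc.prems(4), symmetric])
        simp
    finally show ?case .
  qed
next
  case False
  then show ?thesis
    unfolding skew_pieri_sum_def
    by (simp add: coeff_mult_eq_0_if_x0 schur_coeff_eq_0_if_x0 h_coeff_def)
qed

(* The case la = mu = 0 of the identity: its left side is h_n and its right side s_(n). *)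
lemma schur_coeff_row:
  assumes "finite {i. p i \<noteq> 0}"
  shows "schur_coeff (row_partition n) empty_partition p = h_coeff n p"
proof -
  have "schur_coeff empty_partition empty_partition = (\<lambda>q. if q = (\<lambda>_. 0) then 1 else 0)"
    by (rule ext) (rule schur_coeff_same)
  then have "h_coeff n p = coeff_mult (schur_coeff empty_partition empty_partition) (h_coeff n) p"
    using coeff_mult_unit[OF assms] by simp
  also have "\<dots> = skew_pieri_sum empty_partition empty_partition n p"
    by (rule coeff_mult_schur_h_eq_skew_pieri_sum[OF is_partition_empty is_partition_empty assms])
  also have "\<dots> = schur_coeff (row_partition n) empty_partition p"
  proof -
    have "(\<Sum>k = 0..n. (-1) ^ k * (\<Sum>mm | mm = empty_partition \<and> k = 0. schur_coeff (row_partition n) mm p))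
        = (\<Sum>k = 0..n. if k = 0 then schur_coeff (row_partition n) empty_partition p else 0)"
      by (rule sum.cong) auto
    then show ?thesis
      unfolding skew_pieri_sum_def vertical_strip_empty_iff horizontal_strip_empty_iff by simp
  qed
  finally show ?thesis ..
qed

lemma skew_pieri_sum_lookup:
  assumes "part_subseteq mu la"
  shows "skew_pieri_sum la mu n (Poly_Mapping.lookup a) = (\<Sum>k = 0..n. (-1) ^ k *
    (\<Sum>(lp, mm) \<in> {(lp, mm). horizontal_strip lp la (n - k) \<and> vertical_strip mu mm k}. skew_schur lp mm a))"
proof -
  have skew: "skew_schur lp mm a = schur_coeff lp mm (Poly_Mapping.lookup a)"
    if "horizontal_strip lp la s" and "vertical_strip mu mm k" for lp mm s k
  proof (rule skew_schur_eq_schur_coeff)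
    show "part_subseteq mm lp"
      unfolding part_subseteq_def
    proof
      fix i
      have "mm i \<le> mu i" and "mu i \<le> la i" and "la i \<le> lp i"
        using that assms unfolding horizontal_strip_def vertical_strip_def part_subseteq_def by blast+
      then show "mm i \<le> lp i" by linarith
    qed
  qed
  have "(\<Sum>(lp, mm) \<in> {(lp, mm). horizontal_strip lp la (n - k) \<and> vertical_strip mu mm k}. skew_schur lp mm a)
    = (\<Sum>mm | vertical_strip mu mm k. \<Sum>lp | horizontal_strip lp la (n - k). schur_coeff lp mm (Poly_Mapping.lookup a))"
    for k
  proof -
    have "{(lp, mm). horizontal_strip lp la (n - k) \<and> vertical_strip mu mm k}
        = {lp. horizontal_strip lp la (n - k)} \<times> {mm. vertical_strip mu mm k}"
      by auto
    then have "(\<Sum>(lp, mm) \<in> {(lp, mm). horizontal_strip lp la (n - k) \<and> vertical_strip mu mm k}. skew_schur lp mm a)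
        = (\<Sum>lp | horizontal_strip lp la (n - k). \<Sum>mm | vertical_strip mu mm k. skew_schur lp mm a)"
      by (simp add: sum.cartesian_product)
    also have "\<dots> = (\<Sum>mm | vertical_strip mu mm k. \<Sum>lp | horizontal_strip lp la (n - k). skew_schur lp mm a)"
      by (rule sum.swap)
    also have "\<dots> = (\<Sum>mm | vertical_strip mu mm k. \<Sum>lp | horizontal_strip lp la (n - k).
        schur_coeff lp mm (Poly_Mapping.lookup a))"
      using skew by (intro sum.cong refl) simp
    finally show ?thesis .
  qed
  then show ?thesis unfolding skew_pieri_sum_def by simp
qed

lemma skew_schur_row_partition: "skew_schur (row_partition n) empty_partition = hsym n"
proof
  fix a
  have "part_subseteq empty_partition (row_partition n)"
    by (simp add: part_subseteq_def empty_partition_def)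
  then show "skew_schur (row_partition n) empty_partition a = hsym n a"
    by (simp add: skew_schur_eq_schur_coeff schur_coeff_row finite_lookup hsym_eq_h_coeff)
qed

lemma sf_mult_skew_schur_hsym:
  assumes "is_partition la" and "is_partition mu" and "part_subseteq mu la"
  shows "sf_mult (skew_schur la mu) (hsym n) a = skew_pieri_sum la mu n (Poly_Mapping.lookup a)"
proof -
  have "skew_schur la mu = (\<lambda>a. schur_coeff la mu (Poly_Mapping.lookup a))"
    using assms(3) by (simp add: fun_eq_iff skew_schur_eq_schur_coeff)
  moreover have "hsym n = (\<lambda>a. h_coeff n (Poly_Mapping.lookup a))"
    by (simp add: fun_eq_iff hsym_eq_h_coeff)
  ultimately have "sf_mult (skew_schur la mu) (hsym n) a
      = coeff_mult (schur_coeff la mu) (h_coeff n) (Poly_Mapping.lookup a)"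
    by (simp only: sf_mult_lookup)
  also have "\<dots> = skew_pieri_sum la mu n (Poly_Mapping.lookup a)"
    by (rule coeff_mult_schur_h_eq_skew_pieri_sum[OF assms(1,2) finite_lookup])
  finally show ?thesis .
qed

theorem theorem3p2:
  fixes la mu :: "nat \<Rightarrow> nat" and n :: nat
  assumes "is_partition la" and "is_partition mu" and "part_subseteq mu la" and "0 < n"
  shows "sf_mult (skew_schur la mu) (skew_schur (row_partition n) empty_partition) =
           sf_mult (skew_schur la mu) (hsym n)
       \<and> sf_mult (skew_schur la mu) (hsym n) =
           (\<lambda>a. \<Sum>k = 0..n. (-1) ^ k *
              (\<Sum>(lp, mm) \<in> {(lp, mm). horizontal_strip lp la (n - k) \<and> vertical_strip mu mm k}.
                  skew_schur lp mm a))"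
  using sf_mult_skew_schur_hsym[OF assms(1-3)] skew_pieri_sum_lookup[OF assms(3)]
  by (simp add: skew_schur_row_partition fun_eq_iff)

end
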